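(* Let $\Omega$ be a set, let $n\ge 1$, and let $H_1,\ldots,H_n$ and $G$ be subgroups of $\mathrm{Sym}(\Omega)$ such that the $n$-tuple $(H_1,\ldots,H_n)$ is confined by $G$. Let $P\subset \mathrm{Sym}(\Omega)$ be a confining subset for $(H_1,\ldots,H_n,G)$ and let $r=|P|$. Assume that $\{\Omega_\sigma\}_{\sigma\in P}$ is a displacement configuration for $P$ such that for every $\sigma\in P$ the group $\mathrm{Rist}_G(\Omega_\sigma)$ is non-trivial and satisfies $\mathrm{FC}_{\leqslant nr}(\mathrm{Rist}_G(\Omega_\sigma))=\{1\}$. Then there exist $\rho\in P$ and $k\le n$ such that $H_k$ contains a non-trivial subgroup $N\le \mathrm{Rist}_G(\Omega_\rho)$ whose normalizer in $\mathrm{Rist}_G(\Omega_\rho)$ has index at most $nr$ in $\mathrm{Rist}_G(\Omega_\rho)$.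
   Context: For subgroups $H_1,\ldots,H_n,G$ of a group $L$, the $n$-tuple $(H_1,\ldots,H_n)$ is confined by $G$ if there exists a finite subset $P$ of non-trivial elements of $L$ such that for every $g\in G$ there exists $j$ with $gH_jg^{-1}\cap P\neq\varnothing$; such a $P$ is called a confining subset for $(H_1,\ldots,H_n,G)$. Here $L=\mathrm{Sym}(\Omega)$, the group of all permutations of $\Omega$. For $\Sigma\subset\Omega$, the rigid stabilizer $\mathrm{Rist}_G(\Sigma)$ is the set of elements of $G$ fixing every point of $\Omega\setminus\Sigma$. For a group $K$ and $m\ge1$, $\mathrm{FC}_{\leqslant m}(K)$ is the set of elements of $K$ whose conjugacy class in $K$ has cardinality at most $m$. If $P$ is a finite set of non-trivial elements of $\mathrm{Sym}(\Omega)$, a collection $\{\Omega_\sigma\}_{\sigma\in P}$ of non-empty subsets of $\Omega$ is a displacement configuration for $P$ if: (C1) for all $\sigma,\rho\in P$, either $\Omega_\sigma=\Omega_\rho$ or $\Omega_\sigma\cap\Omega_\rho=\varnothing$; (C3) for all $\sigma,\rho\in P$, either $\sigma$ fixes $\Omega_\rho$ pointwise, or $\sigma(\Omega_\rho)$ is disjoint from $\bigcup_{\alpha\in P}\Omega_\alpha$; (C4) for all $\sigma\in P$, $\sigma(\Omega_\sigma)$ is disjoint from $\bigcup_{\alpha\in P}\Omega_\alpha$ and from $\bigcup_{\alpha\in P}\sigma^{-1}(\Omega_\alpha)$. *)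

theory Defs
  imports "HOL-Algebra.Bij" "HOL-Algebra.Coset"
begin

text \<open>Sym(Omega) is rendered as the HOL-Algebra group BijGroup Omega (extensional bijections of Omega).\<close>

definition conj_set :: "'a set \<Rightarrow> ('a \<Rightarrow> 'a) \<Rightarrow> ('a \<Rightarrow> 'a) set \<Rightarrow> ('a \<Rightarrow> 'a) set" where
  "conj_set \<Omega> g H = {g \<otimes>\<^bsub>BijGroup \<Omega>\<^esub> h \<otimes>\<^bsub>BijGroup \<Omega>\<^esub> inv\<^bsub>BijGroup \<Omega>\<^esub> g | h. h \<in> H}"

definition confining_subset ::
  "'a set \<Rightarrow> nat \<Rightarrow> (nat \<Rightarrow> ('a \<Rightarrow> 'a) set) \<Rightarrow> ('a \<Rightarrow> 'a) set \<Rightarrow> ('a \<Rightarrow> 'a) set \<Rightarrow> bool" where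
  "confining_subset \<Omega> n H G P \<longleftrightarrow>
     finite P \<and> P \<subseteq> carrier (BijGroup \<Omega>) - {\<one>\<^bsub>BijGroup \<Omega>\<^esub>} \<and>
     (\<forall>g\<in>G. \<exists>j\<in>{1..n}. conj_set \<Omega> g (H j) \<inter> P \<noteq> {})"

definition confined_by ::
  "'a set \<Rightarrow> nat \<Rightarrow> (nat \<Rightarrow> ('a \<Rightarrow> 'a) set) \<Rightarrow> ('a \<Rightarrow> 'a) set \<Rightarrow> bool" where
  "confined_by \<Omega> n H G \<longleftrightarrow> (\<exists>P. confining_subset \<Omega> n H G P)"

definition Rist :: "'a set \<Rightarrow> ('a \<Rightarrow> 'a) set \<Rightarrow> 'a set \<Rightarrow> ('a \<Rightarrow> 'a) set" where
  "Rist \<Omega> G \<Sigma> = {g \<in> G. \<forall>x \<in> \<Omega> - \<Sigma>. g x = x}"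

definition FC_le :: "'a set \<Rightarrow> nat \<Rightarrow> ('a \<Rightarrow> 'a) set \<Rightarrow> ('a \<Rightarrow> 'a) set" where
  "FC_le \<Omega> m K = {x \<in> K. finite {g \<otimes>\<^bsub>BijGroup \<Omega>\<^esub> x \<otimes>\<^bsub>BijGroup \<Omega>\<^esub> inv\<^bsub>BijGroup \<Omega>\<^esub> g | g. g \<in> K}
                      \<and> card {g \<otimes>\<^bsub>BijGroup \<Omega>\<^esub> x \<otimes>\<^bsub>BijGroup \<Omega>\<^esub> inv\<^bsub>BijGroup \<Omega>\<^esub> g | g. g \<in> K} \<le> m}"

definition normalizer_in :: "'a set \<Rightarrow> ('a \<Rightarrow> 'a) set \<Rightarrow> ('a \<Rightarrow> 'a) set \<Rightarrow> ('a \<Rightarrow> 'a) set" where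
  "normalizer_in \<Omega> K N = {g \<in> K. conj_set \<Omega> g N = N}"

definition index_le :: "'a set \<Rightarrow> ('a \<Rightarrow> 'a) set \<Rightarrow> ('a \<Rightarrow> 'a) set \<Rightarrow> nat \<Rightarrow> bool" where
  "index_le \<Omega> K A m \<longleftrightarrow>
     finite (rcosets\<^bsub>(BijGroup \<Omega>)\<lparr>carrier := K\<rparr>\<^esub> A) \<and>
     card (rcosets\<^bsub>(BijGroup \<Omega>)\<lparr>carrier := K\<rparr>\<^esub> A) \<le> m"

text \<open>Displacement configuration (conditions C1, C3, C4).\<close>
definition displacement_configuration ::
  "'a set \<Rightarrow> ('a \<Rightarrow> 'a) set \<Rightarrow> (('a \<Rightarrow> 'a) \<Rightarrow> 'a set) \<Rightarrow> bool" where
  "displacement_configuration \<Omega> P W \<longleftrightarrow>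
     (\<forall>\<sigma>\<in>P. W \<sigma> \<noteq> {} \<and> W \<sigma> \<subseteq> \<Omega>) \<and>
     (\<forall>\<sigma>\<in>P. \<forall>\<rho>\<in>P. W \<sigma> = W \<rho> \<or> W \<sigma> \<inter> W \<rho> = {}) \<and>
     (\<forall>\<sigma>\<in>P. \<forall>\<rho>\<in>P. (\<forall>x\<in>W \<rho>. \<sigma> x = x) \<or> \<sigma> ` W \<rho> \<inter> (\<Union>\<alpha>\<in>P. W \<alpha>) = {}) \<and>
     (\<forall>\<sigma>\<in>P. \<sigma> ` W \<sigma> \<inter> (\<Union>\<alpha>\<in>P. W \<alpha>) = {} \<and>
             \<sigma> ` W \<sigma> \<inter> (\<Union>\<alpha>\<in>P. (inv\<^bsub>BijGroup \<Omega>\<^esub> \<sigma>) ` W \<alpha>) = {})"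

end

theory Submission
  imports Defs
begin

(* Write R(B) for the rigid stabiliser in G of a block B = W sigma, and let A(j, sigma) be the
   projection to R(W sigma) of the intersection of H_j with R(W sigma) x sigma R(W sigma) sigma^-1.
   Products of one element of R(B) per block are block-preserving elements of G; by confinement each
   conjugates some sigma in P into some H_j, and two such products differing only on W sigma differ
   by an element of A(j, sigma). Choosing in every block a finite set that meets the cosets of these
   projections sparsely (B. H. Neumann's lemma handles those of infinite index), counting shows that
   some A(j, sigma) has index at most n |P| in R(W sigma). It normalises the intersection N of H_j
   with R(W sigma), which gives the index bound. If N were trivial, a commutator computation would
   make A(j, sigma) centralise conjugates of all second components, so these vanish by the FC
   condition; then A(j, sigma) is trivial, and so is R(W sigma), again by the FC condition. *)

section \<open>Covering a group by finitely many cosets\<close>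

definition lcoset_cover :: "('g, 'b) monoid_scheme \<Rightarrow> 'g set \<Rightarrow> 'g set \<Rightarrow> 'g set \<Rightarrow> bool" where
  "lcoset_cover G K A C \<longleftrightarrow> C \<subseteq> K \<and> finite C \<and> K \<subseteq> (\<Union>c\<in>C. c <#\<^bsub>G\<^esub> A)"

definition finite_index_in :: "('g, 'b) monoid_scheme \<Rightarrow> 'g set \<Rightarrow> 'g set \<Rightarrow> bool" where
  "finite_index_in G K A \<longleftrightarrow> (\<exists>C. lcoset_cover G K A C)"

definition lcoset_separated :: "('g, 'b) monoid_scheme \<Rightarrow> 'g set set \<Rightarrow> 'g set \<Rightarrow> bool" where
  "lcoset_separated G S Y \<longleftrightarrow> (\<forall>y\<in>Y. \<forall>y'\<in>Y. \<forall>A\<in>S. y' \<in> y <#\<^bsub>G\<^esub> A \<longrightarrow> y = y')"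

definition lcoset_transversal :: "('g, 'b) monoid_scheme \<Rightarrow> 'g set \<Rightarrow> 'g set \<Rightarrow> 'g set \<Rightarrow> bool" where
  "lcoset_transversal G K D T \<longleftrightarrow> lcoset_cover G K D T \<and> lcoset_separated G {D} T"

context group
begin

lemma inv_mult_cancel_left [simp]: "x \<in> carrier G \<Longrightarrow> y \<in> carrier G \<Longrightarrow> inv x \<otimes> (x \<otimes> y) = y"
  by (simp add: m_assoc[symmetric])

lemma mult_inv_cancel_left [simp]: "x \<in> carrier G \<Longrightarrow> y \<in> carrier G \<Longrightarrow> x \<otimes> (inv x \<otimes> y) = y"
  by (simp add: m_assoc[symmetric])

lemma lcoset_mem_iff:
  assumes "subgroup A G" "c \<in> carrier G" "x \<in> carrier G"
  shows "x \<in> c <# A \<longleftrightarrow> inv c \<otimes> x \<in> A"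
proof
  assume "x \<in> c <# A"
  then obtain a where a: "a \<in> A" "x = c \<otimes> a" unfolding l_coset_def by auto
  have "a \<in> carrier G" using a(1) assms(1) subgroup.subset by blast
  then have "inv c \<otimes> x = a" using a(2) assms(2) by (simp add: m_assoc[symmetric])
  then show "inv c \<otimes> x \<in> A" using a(1) by simp
next
  assume "inv c \<otimes> x \<in> A"
  then show "x \<in> c <# A" by (rule subgroup.lcos_module_rev[OF assms(1) is_group assms(2,3)])
qed

lemma lcoset_self:
  assumes "subgroup A G" "x \<in> carrier G"
  shows "x \<in> x <# A"
  using assms lcoset_mem_iff subgroup.one_closed by fastforce

text \<open>The induction step of B. H. Neumann's lemma below: if the cosets of \<open>B\<close> in a finite cover
  of \<open>K\<close> miss a point \<open>x\<close>, then \<open>y B \<subseteq> \<Union> y x\<^sup>-\<^sup>1 c' B'\<close> over the other cosets \<open>c' B'\<close>.\<close>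

lemma lcoset_cover_drop_subgroup:
  assumes K: "subgroup K G" and fin: "finite CS" and CSK: "fst ` CS \<subseteq> K"
    and sg: "\<And>B'. B' \<in> snd ` CS \<Longrightarrow> subgroup B' G \<and> B' \<subseteq> K"
    and cov: "K \<subseteq> (\<Union>(c, B')\<in>CS. c <# B')"
    and x: "x \<in> K" "\<And>c. (c, B) \<in> CS \<Longrightarrow> x \<notin> c <# B"
  shows "\<exists>CS'. finite CS' \<and> fst ` CS' \<subseteq> K \<and> snd ` CS' \<subseteq> snd ` CS - {B}
    \<and> K \<subseteq> (\<Union>(c, B')\<in>CS'. c <# B')"
proof -
  have Kc: "K \<subseteq> carrier G" using K subgroup.subset by blast
  have xc: "x \<in> carrier G" using x Kc by blast
  define CS' where "CS' = (\<lambda>((y, _), (c', B')). (y \<otimes> inv x \<otimes> c', B')) `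
      ({p\<in>CS. snd p = B} \<times> {p\<in>CS. snd p \<noteq> B}) \<union> {p\<in>CS. snd p \<noteq> B}"
  have "finite CS'" unfolding CS'_def using fin by simp
  moreover have "fst ` CS' \<subseteq> K"
  proof -
    have "y \<otimes> inv x \<otimes> c' \<in> K" if "y \<in> K" "c' \<in> K" for y c'
      using that x(1) K by (simp add: subgroup.m_closed subgroup.m_inv_closed)
    then show ?thesis using CSK unfolding CS'_def by (fastforce simp: image_subset_iff)
  qed
  moreover have "snd ` CS' \<subseteq> snd ` CS - {B}" unfolding CS'_def by (fastforce simp: image_iff)
  moreover have "K \<subseteq> (\<Union>(c, B')\<in>CS'. c <# B')"
  proof
    fix z assume z: "z \<in> K"
    then obtain y B' where yB': "(y, B') \<in> CS" "z \<in> y <# B'" using cov by auto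
    show "z \<in> (\<Union>(c, B')\<in>CS'. c <# B')"
    proof (cases "B' = B")
      case False
      then have "(y, B') \<in> CS'" using yB'(1) unfolding CS'_def by simp
      then show ?thesis using yB'(2) by blast
    next
      case True
      have Bsg: "subgroup B G" "B \<subseteq> K" using sg yB'(1) True by force+
      have yc: "y \<in> carrier G" using yB'(1) CSK Kc by force
      obtain b where b: "b \<in> B" "z = y \<otimes> b" using yB' True unfolding l_coset_def by auto
      have bc: "b \<in> carrier G" using b Bsg Kc by blast
      have "x \<otimes> b \<in> K" using subgroup.m_closed[OF K x(1)] b Bsg by blast
      then obtain c' B'' where cB'': "(c', B'') \<in> CS" "x \<otimes> b \<in> c' <# B''" using cov by auto
      have c'c: "c' \<in> carrier G" using cB''(1) CSK Kc by force
      obtain b'' where b'': "b'' \<in> B''" "x \<otimes> b = c' \<otimes> b''" using cB'' unfolding l_coset_def by auto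
      have b''c: "b'' \<in> carrier G" using b'' sg cB''(1) Kc by force
      have "B'' \<noteq> B"
      proof
        assume "B'' = B"
        then have "inv c' \<otimes> (x \<otimes> b) \<otimes> inv b \<in> B"
          using cB'' lcoset_mem_iff[OF Bsg(1) c'c] xc bc Bsg(1)
          by (simp add: subgroup.m_closed subgroup.m_inv_closed b(1))
        then have "x \<in> c' <# B"
          using lcoset_mem_iff[OF Bsg(1) c'c xc] c'c xc bc by (simp add: m_assoc)
        then show False using x(2) cB''(1) \<open>B'' = B\<close> by blast
      qed
      have "b = inv x \<otimes> (c' \<otimes> b'')"
        using b''(2) xc bc c'c b''c by (simp add: inv_solve_left)
      then have "z = (y \<otimes> inv x \<otimes> c') \<otimes> b''"
        using b(2) yc xc c'c b''c by (simp add: m_assoc)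
      then have "z \<in> (y \<otimes> inv x \<otimes> c') <# B''" using b''(1) unfolding l_coset_def by blast
      moreover have "(y \<otimes> inv x \<otimes> c', B'') \<in> CS'"
        unfolding CS'_def using yB'(1) True cB''(1) \<open>B'' \<noteq> B\<close>
        by (intro UnI1 image_eqI[where x="((y, B), (c', B''))"]) auto
      ultimately show ?thesis by blast
    qed
  qed
  ultimately show ?thesis by blast
qed

lemma not_covered_by_infinite_index_lcosets:
  assumes K: "subgroup K G" and "finite CS" and "fst ` CS \<subseteq> K"
    and "\<And>B. B \<in> snd ` CS \<Longrightarrow> subgroup B G \<and> B \<subseteq> K \<and> \<not> finite_index_in G K B"
  shows "\<not> K \<subseteq> (\<Union>(c, B)\<in>CS. c <# B)"
  using assms(2-)
proof (induction "card (snd ` CS)" arbitrary: CS rule: less_induct)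
  case less
  show ?case
  proof
    assume cov: "K \<subseteq> (\<Union>(c, B)\<in>CS. c <# B)"
    then obtain c0 B where cB: "(c0, B) \<in> CS" using subgroup.one_closed[OF K] by auto
    have "lcoset_cover G K B (fst ` {p\<in>CS. snd p = B}) \<Longrightarrow> False"
      using less.prems(3) cB unfolding finite_index_in_def by force
    moreover have "fst ` {p\<in>CS. snd p = B} \<subseteq> K" "finite (fst ` {p\<in>CS. snd p = B})"
      using less.prems(1,2) by auto
    ultimately have "\<not> K \<subseteq> (\<Union>c\<in>fst ` {p\<in>CS. snd p = B}. c <# B)"
      unfolding lcoset_cover_def by blast
    then obtain x where x: "x \<in> K" "\<And>c. (c, B) \<in> CS \<Longrightarrow> x \<notin> c <# B"
      by (force simp: image_iff)
    obtain CS' where CS': "finite CS'" "fst ` CS' \<subseteq> K" "snd ` CS' \<subseteq> snd ` CS - {B}"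
      "K \<subseteq> (\<Union>(c, B')\<in>CS'. c <# B')"
      using lcoset_cover_drop_subgroup[OF K less.prems(1,2) _ cov x] less.prems(3) by blast
    have "card (snd ` CS') \<le> card (snd ` CS - {B})"
      using CS'(3) less.prems(1) by (intro card_mono) auto
    also have "\<dots> < card (snd ` CS)"
      using cB less.prems(1) by (intro card_Diff1_less) (auto intro: rev_image_eqI)
    finally have "card (snd ` CS') < card (snd ` CS)" .
    moreover have "\<And>B'. B' \<in> snd ` CS' \<Longrightarrow> subgroup B' G \<and> B' \<subseteq> K \<and> \<not> finite_index_in G K B'"
      using CS'(3) less.prems(3) by blast
    ultimately show False using less.hyps[of CS'] CS'(1,2,4) by blast
  qed
qed

lemma lcoset_Int:
  assumes "subgroup A G" "subgroup B G" "e \<in> carrier G"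
  shows "e <# (A \<inter> B) = (e <# A) \<inter> (e <# B)"
proof -
  have "x \<in> e <# (A \<inter> B) \<longleftrightarrow> x \<in> (e <# A) \<inter> (e <# B)" for x
  proof (cases "x \<in> carrier G")
    case True
    then show ?thesis
      using lcoset_mem_iff[OF assms(1) assms(3)] lcoset_mem_iff[OF assms(2) assms(3)]
        lcoset_mem_iff[OF subgroups_Inter_pair[OF assms(1,2)] assms(3)] by blast
  next
    case False
    then show ?thesis
      using l_coset_carrier assms subgroups_Inter_pair by blast
  qed
  then show ?thesis by blast
qed

lemma finite_index_in_refl:
  assumes "subgroup K G"
  shows "finite_index_in G K K"
  unfolding finite_index_in_def lcoset_cover_def
  using assms subgroup.one_closed[OF assms] lcos_mult_one[OF subgroup.subset[OF assms]]
  by (intro exI[of _ "{\<one>}"]) auto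

lemma finite_index_in_Int:
  assumes K: "subgroup K G" and A: "subgroup A G" "finite_index_in G K A"
    and B: "subgroup B G" "finite_index_in G K B"
  shows "finite_index_in G K (A \<inter> B)"
proof -
  have Kc: "K \<subseteq> carrier G" using K subgroup.subset by blast
  obtain C1 where C1: "lcoset_cover G K A C1" using A(2) unfolding finite_index_in_def by blast
  obtain C2 where C2: "lcoset_cover G K B C2" using B(2) unfolding finite_index_in_def by blast
  define Q where "Q = {(c1, c2) \<in> C1 \<times> C2. K \<inter> (c1 <# A) \<inter> (c2 <# B) \<noteq> {}}"
  have "\<forall>q\<in>Q. \<exists>e. e \<in> K \<inter> (fst q <# A) \<inter> (snd q <# B)" unfolding Q_def by auto
  then obtain e where e: "\<And>q. q \<in> Q \<Longrightarrow> e q \<in> K \<inter> (fst q <# A) \<inter> (snd q <# B)" by metis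
  have "lcoset_cover G K (A \<inter> B) (e ` Q)"
    unfolding lcoset_cover_def
  proof (intro conjI)
    show "e ` Q \<subseteq> K" using e by blast
    have "Q \<subseteq> C1 \<times> C2" unfolding Q_def by blast
    then show "finite (e ` Q)" using C1 C2 finite_subset unfolding lcoset_cover_def by blast
    show "K \<subseteq> (\<Union>c\<in>e ` Q. c <# (A \<inter> B))"
    proof
      fix z assume z: "z \<in> K"
      obtain c1 c2 where c: "c1 \<in> C1" "c2 \<in> C2" "z \<in> c1 <# A" "z \<in> c2 <# B"
        using C1 C2 z unfolding lcoset_cover_def by blast
      have cc: "c1 \<in> carrier G" "c2 \<in> carrier G"
        using c(1,2) C1 C2 Kc unfolding lcoset_cover_def by blast+
      have q: "(c1, c2) \<in> Q" unfolding Q_def using c z by blast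
      have ec: "e (c1, c2) \<in> carrier G" using e[OF q] Kc by blast
      have "c1 <# A = e (c1, c2) <# A" "c2 <# B = e (c1, c2) <# B"
        using e[OF q] l_repr_independence[OF _ cc(1) A(1)] l_repr_independence[OF _ cc(2) B(1)]
        by simp_all
      then have "z \<in> e (c1, c2) <# (A \<inter> B)" using c(3,4) lcoset_Int[OF A(1) B(1) ec] by blast
      then show "z \<in> (\<Union>c\<in>e ` Q. c <# (A \<inter> B))" using q by blast
    qed
  qed
  then show ?thesis unfolding finite_index_in_def by blast
qed

lemma finite_index_in_Inter:
  assumes K: "subgroup K G" and "finite I"
    and "\<And>A. A \<in> I \<Longrightarrow> subgroup A G \<and> finite_index_in G K A"
  shows "subgroup (K \<inter> \<Inter>I) G \<and> finite_index_in G K (K \<inter> \<Inter>I)"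
  using assms(2,3)
proof (induction rule: finite_induct)
  case empty
  then show ?case using K finite_index_in_refl[OF K] by simp
next
  case (insert A I)
  have eq: "K \<inter> \<Inter>(insert A I) = A \<inter> (K \<inter> \<Inter>I)" by auto
  have IH: "subgroup (K \<inter> \<Inter>I) G" "finite_index_in G K (K \<inter> \<Inter>I)" using insert by simp_all
  have A: "subgroup A G" "finite_index_in G K A" using insert.prems by simp_all
  show ?case
    unfolding eq using subgroups_Inter_pair[OF A(1) IH(1)] finite_index_in_Int[OF K A IH] by simp
qed

lemma finite_index_in_trans:
  assumes K: "subgroup K G" and D: "subgroup D G" "D \<subseteq> K" "finite_index_in G K D"
    and A: "subgroup A G" and DA: "finite_index_in G D (D \<inter> A)"
  shows "finite_index_in G K A"
proof -
  have Kc: "K \<subseteq> carrier G" using K subgroup.subset by blast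
  obtain C1 where C1: "lcoset_cover G K D C1" using D(3) unfolding finite_index_in_def by blast
  obtain C2 where C2: "lcoset_cover G D (D \<inter> A) C2" using DA unfolding finite_index_in_def by blast
  have "lcoset_cover G K A ({t \<otimes> e | t e. t \<in> C1 \<and> e \<in> C2})"
    unfolding lcoset_cover_def
  proof (intro conjI)
    show "{t \<otimes> e | t e. t \<in> C1 \<and> e \<in> C2} \<subseteq> K"
      using C1 C2 D(2) subgroup.m_closed[OF K] unfolding lcoset_cover_def by blast
    show "finite {t \<otimes> e | t e. t \<in> C1 \<and> e \<in> C2}"
      using C1 C2 unfolding lcoset_cover_def by (simp add: finite_image_set2)
    show "K \<subseteq> (\<Union>c\<in>{t \<otimes> e | t e. t \<in> C1 \<and> e \<in> C2}. c <# A)"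
    proof
      fix z assume z: "z \<in> K"
      then obtain t where t: "t \<in> C1" "z \<in> t <# D" using C1 unfolding lcoset_cover_def by blast
      have tc: "t \<in> carrier G" "z \<in> carrier G" using t(1) C1 z Kc unfolding lcoset_cover_def by blast+
      have "inv t \<otimes> z \<in> D" using lcoset_mem_iff[OF D(1) tc] t(2) by blast
      then obtain e where e: "e \<in> C2" "inv t \<otimes> z \<in> e <# (D \<inter> A)"
        using C2 unfolding lcoset_cover_def by blast
      have ec: "e \<in> carrier G" using e(1) C2 D(2) Kc unfolding lcoset_cover_def by blast
      have "z = t \<otimes> (inv t \<otimes> z)" using tc by (simp add: m_assoc[symmetric])
      then have "z \<in> t <# (e <# (D \<inter> A))" using e(2) unfolding l_coset_def by blast
      then have "z \<in> (t \<otimes> e) <# (D \<inter> A)"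
        using lcos_m_assoc[of "D \<inter> A" t e] tc(1) ec subgroup.subset[OF D(1)] by blast
      then have "z \<in> (t \<otimes> e) <# A" unfolding l_coset_def by blast
      then show "z \<in> (\<Union>c\<in>{t \<otimes> e | t e. t \<in> C1 \<and> e \<in> C2}. c <# A)" using t(1) e(1) by blast
    qed
  qed
  then show ?thesis unfolding finite_index_in_def by blast
qed

text \<open>A cover of minimal cardinality uses each coset only once.\<close>

lemma exists_lcoset_transversal:
  assumes D: "subgroup D G" and fi: "finite_index_in G K D" and Kc: "K \<subseteq> carrier G"
  shows "\<exists>T. finite T \<and> lcoset_transversal G K D T"
proof -
  obtain C where C: "lcoset_cover G K D C" using fi unfolding finite_index_in_def by blast
  let ?P = "\<lambda>T. T \<subseteq> C \<and> K \<subseteq> (\<Union>t\<in>T. t <# D)"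
  have "?P C" using C unfolding lcoset_cover_def by blast
  then have "\<exists>T. ?P T \<and> (\<forall>T'. ?P T' \<longrightarrow> card T \<le> card T')" by (rule ex_has_least_nat)
  then obtain T where T: "T \<subseteq> C" "K \<subseteq> (\<Union>t\<in>T. t <# D)"
    and min: "\<forall>T'. ?P T' \<longrightarrow> card T \<le> card T'"
    by blast
  have finT: "finite T" using T C finite_subset unfolding lcoset_cover_def by blast
  have "lcoset_separated G {D} T"
    unfolding lcoset_separated_def
  proof (intro ballI impI, rule ccontr)
    fix t t' A assume t: "t \<in> T" "t' \<in> T" "A \<in> {D}" "t' \<in> t <# A" "t \<noteq> t'"
    have tc: "t \<in> carrier G" using t(1) T C Kc unfolding lcoset_cover_def by blast
    have "t <# D = t' <# D" using l_repr_independence[OF _ tc D] t(3,4) by blast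
    have "K \<subseteq> (\<Union>s\<in>T - {t'}. s <# D)"
    proof
      fix z assume "z \<in> K"
      then obtain s where s: "s \<in> T" "z \<in> s <# D" using T by blast
      then show "z \<in> (\<Union>s\<in>T - {t'}. s <# D)"
        using \<open>t <# D = t' <# D\<close> t(1,5) by (cases "s = t'") auto
    qed
    then have "card T \<le> card (T - {t'})" using min T by blast
    then show False using card_Diff1_less[OF finT t(2)] by linarith
  qed
  then show ?thesis
    using finT T C unfolding lcoset_transversal_def lcoset_cover_def by blast
qed

lemma exists_lcoset_separated_subset:
  assumes Kc: "K \<subseteq> carrier G" and S: "\<And>A. A \<in> S \<Longrightarrow> subgroup A G"
    and ext: "\<And>Y. Y \<subseteq> K \<Longrightarrow> finite Y \<Longrightarrow> card Y < k \<Longrightarrow> \<exists>z\<in>K - Y. \<forall>y\<in>Y. \<forall>A\<in>S. z \<notin> y <# A"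
  shows "\<exists>Y\<subseteq>K. finite Y \<and> card Y = k \<and> lcoset_separated G S Y"
  using ext
proof (induction k)
  case 0
  then show ?case unfolding lcoset_separated_def by (intro exI[of _ "{}"]) auto
next
  case (Suc k)
  have "\<exists>Y\<subseteq>K. finite Y \<and> card Y = k \<and> lcoset_separated G S Y"
    using Suc.prems less_SucI by (intro Suc.IH) blast
  then obtain Y where Y: "Y \<subseteq> K" "finite Y" "card Y = k" "lcoset_separated G S Y"
    by blast
  obtain z where z: "z \<in> K - Y" "\<forall>y\<in>Y. \<forall>A\<in>S. z \<notin> y <# A"
    using Suc.prems[OF Y(1,2)] Y(3) by auto
  have "lcoset_separated G S (insert z Y)"
    unfolding lcoset_separated_def
  proof (intro ballI impI)
    fix y y' A assume yy: "y \<in> insert z Y" "y' \<in> insert z Y" "A \<in> S" "y' \<in> y <# A"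
    have "y \<in> y' <# A" using l_coset_swap[OF yy(4) _ S[OF yy(3)]] yy(1) z(1) Y(1) Kc by blast
    then show "y = y'" using yy z(2) Y(4) unfolding lcoset_separated_def by blast
  qed
  then show ?case using Y z by (intro exI[of _ "insert z Y"]) auto
qed

lemma exists_lcoset_separated_of_index_gt:
  assumes K: "subgroup K G" and A: "subgroup A G"
    and ncov: "\<not> (\<exists>C. lcoset_cover G K A C \<and> card C \<le> m)"
  shows "\<exists>Y\<subseteq>K. finite Y \<and> card Y = Suc m \<and> lcoset_separated G {A} Y"
proof (rule exists_lcoset_separated_subset)
  show Kc: "K \<subseteq> carrier G" using K subgroup.subset by blast
  fix Y assume Y: "Y \<subseteq> K" "finite Y" "card Y < Suc m"
  then have "\<not> K \<subseteq> (\<Union>y\<in>Y. y <# A)" using ncov unfolding lcoset_cover_def by auto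
  then obtain z where z: "z \<in> K" "\<forall>y\<in>Y. z \<notin> y <# A" by blast
  moreover have "z \<notin> Y" using z lcoset_self[OF A] Kc by blast
  ultimately show "\<exists>z\<in>K - Y. \<forall>y\<in>Y. \<forall>A'\<in>{A}. z \<notin> y <# A'" by blast
qed (use A in blast)

lemma exists_lcoset_separated_of_infinite_index:
  assumes D: "subgroup D G" and J: "finite J" "J \<noteq> {}"
    and JD: "\<And>A. A \<in> J \<Longrightarrow> subgroup A G \<and> \<not> finite_index_in G D (D \<inter> A)"
  shows "\<exists>Y\<subseteq>D. finite Y \<and> card Y = k \<and> lcoset_separated G J Y"
proof (rule exists_lcoset_separated_subset)
  show Dc: "D \<subseteq> carrier G" using D subgroup.subset by blast
  show "\<And>A. A \<in> J \<Longrightarrow> subgroup A G" using JD by blast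
  fix Y assume Y: "Y \<subseteq> D" "finite Y"
  have "\<not> D \<subseteq> (\<Union>(c, B)\<in>Y \<times> (\<lambda>A. D \<inter> A) ` J. c <# B)"
  proof (rule not_covered_by_infinite_index_lcosets[OF D])
    fix B assume "B \<in> snd ` (Y \<times> (\<lambda>A. D \<inter> A) ` J)"
    then obtain A where "A \<in> J" "B = D \<inter> A" by (auto split: if_split_asm)
    then show "subgroup B G \<and> B \<subseteq> D \<and> \<not> finite_index_in G D B"
      using JD subgroups_Inter_pair[OF D] by blast
  qed (use Y J in auto)
  then obtain z where z: "z \<in> D" "\<forall>y\<in>Y. \<forall>A\<in>J. z \<notin> y <# (D \<inter> A)" by blast
  have sep: "\<forall>y\<in>Y. \<forall>A\<in>J. z \<notin> y <# A"
  proof (intro ballI notI)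
    fix y A assume yA: "y \<in> Y" "A \<in> J" "z \<in> y <# A"
    have yc: "y \<in> carrier G" and zc: "z \<in> carrier G" using yA(1) Y(1) z(1) Dc by blast+
    have DA: "subgroup (D \<inter> A) G" using subgroups_Inter_pair[OF D] JD[OF yA(2)] by blast
    have "inv y \<otimes> z \<in> D" using yA(1) Y(1) z(1) D by (blast intro: subgroup.m_closed subgroup.m_inv_closed)
    moreover have "inv y \<otimes> z \<in> A" using yA(3) lcoset_mem_iff[OF _ yc zc] JD[OF yA(2)] by blast
    ultimately have "z \<in> y <# (D \<inter> A)" using lcoset_mem_iff[OF DA yc zc] by blast
    then show False using z(2) yA(1,2) by blast
  qed
  moreover have "z \<notin> Y"
  proof
    assume "z \<in> Y"
    obtain A where "A \<in> J" using J(2) by blast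
    then show False using sep \<open>z \<in> Y\<close> lcoset_self JD z(1) Dc by blast
  qed
  ultimately show "\<exists>z\<in>D - Y. \<forall>y\<in>Y. \<forall>A\<in>J. z \<notin> y <# A" using z(1) by blast
qed

lemma exists_lcoset_separated_in_finite_index:
  assumes K: "subgroup K G" and D: "subgroup D G" "D \<subseteq> K" "finite_index_in G K D"
    and J: "finite J" "\<And>A. A \<in> J \<Longrightarrow> subgroup A G \<and> \<not> finite_index_in G K A"
  shows "\<exists>Y\<subseteq>D. finite Y \<and> card Y = (if J = {} then 1 else Suc m) \<and> lcoset_separated G J Y"
proof (cases "J = {}")
  case True
  then show ?thesis
    using subgroup.one_closed[OF D(1)] unfolding lcoset_separated_def by (intro exI[of _ "{\<one>}"]) simp
next
  case False
  have "\<not> finite_index_in G D (D \<inter> A)" if "A \<in> J" for A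
    using that finite_index_in_trans[OF K D] J(2) by blast
  then show ?thesis
    using exists_lcoset_separated_of_infinite_index[OF D(1) J(1) False, of "Suc m"] J(2) False by auto
qed

lemma lcoset_transversal_Int_card_mono:
  assumes K: "subgroup K G" and D: "subgroup D G" "D \<subseteq> A" and A: "subgroup A G"
    and T: "finite T" "lcoset_transversal G K D T" and c: "c \<in> K" "c' \<in> K"
  shows "card (T \<inter> (c <# A)) \<le> card (T \<inter> (c' <# A))"
proof -
  have Kc: "K \<subseteq> carrier G" using K subgroup.subset by blast
  have TK: "T \<subseteq> K" and sep: "lcoset_separated G {D} T"
    using T(2) unfolding lcoset_transversal_def lcoset_cover_def by blast+
  have "\<forall>z\<in>K. \<exists>t. t \<in> T \<and> z \<in> t <# D"
    using T(2) unfolding lcoset_transversal_def lcoset_cover_def by blast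
  then obtain \<tau> where \<tau>: "\<And>z. z \<in> K \<Longrightarrow> \<tau> z \<in> T \<and> z \<in> \<tau> z <# D" by metis
  define g where "g = c' \<otimes> inv c"
  have gK: "g \<in> K" unfolding g_def using c K by (simp add: subgroup.m_closed subgroup.m_inv_closed)
  have gc: "g \<in> carrier G" and cc: "c \<in> carrier G" "c' \<in> carrier G" using gK c Kc by blast+
  have wK: "g \<otimes> t \<in> K" if "t \<in> T" for t using that TK gK K by (blast intro: subgroup.m_closed)
  have "(\<lambda>t. \<tau> (g \<otimes> t)) ` (T \<inter> (c <# A)) \<subseteq> T \<inter> (c' <# A)"
  proof (rule image_subsetI)
    fix t assume "t \<in> T \<inter> (c <# A)"
    then have t: "t \<in> T" "t \<in> c <# A" by blast+
    have tc: "t \<in> carrier G" using t(1) TK Kc by blast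
    have \<tau>t: "\<tau> (g \<otimes> t) \<in> T" "g \<otimes> t \<in> \<tau> (g \<otimes> t) <# D" using \<tau>[OF wK[OF t(1)]] by blast+
    have \<tau>c: "\<tau> (g \<otimes> t) \<in> carrier G" using \<tau>t(1) TK Kc by blast
    have "inv c' \<otimes> (g \<otimes> t) = inv c \<otimes> t" unfolding g_def using cc tc by (simp add: m_assoc)
    then have "g \<otimes> t \<in> c' <# A"
      using lcoset_mem_iff[OF A cc(1) tc] t(2) lcoset_mem_iff[OF A cc(2)] gc tc by simp
    moreover have "g \<otimes> t \<in> \<tau> (g \<otimes> t) <# A" using \<tau>t(2) D(2) unfolding l_coset_def by blast
    then have "\<tau> (g \<otimes> t) \<in> g \<otimes> t <# A" using l_coset_swap[OF _ \<tau>c A] by blast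
    ultimately have "\<tau> (g \<otimes> t) \<in> c' <# A" using l_repr_independence[OF _ cc(2) A] by blast
    then show "\<tau> (g \<otimes> t) \<in> T \<inter> (c' <# A)" using \<tau>t(1) by blast
  qed
  moreover have "inj_on (\<lambda>t. \<tau> (g \<otimes> t)) (T \<inter> (c <# A))"
  proof (rule inj_onI)
    fix t1 t2 assume t: "t1 \<in> T \<inter> (c <# A)" "t2 \<in> T \<inter> (c <# A)" "\<tau> (g \<otimes> t1) = \<tau> (g \<otimes> t2)"
    have tc: "t1 \<in> carrier G" "t2 \<in> carrier G" using t TK Kc by blast+
    have "g \<otimes> t1 <# D = g \<otimes> t2 <# D"
      using \<tau> wK t l_repr_independence[OF _ _ D(1)] Kc TK by (metis IntE subsetD)
    then have "g \<otimes> t2 \<in> g \<otimes> t1 <# D" using lcoset_self[OF D(1)] gc tc by simp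
    then have "inv (g \<otimes> t1) \<otimes> (g \<otimes> t2) \<in> D" using lcoset_mem_iff[OF D(1)] gc tc by simp
    then have "t2 \<in> t1 <# D"
      using lcoset_mem_iff[OF D(1) tc] gc tc by (simp add: inv_mult_group m_assoc)
    then show "t1 = t2" using sep t unfolding lcoset_separated_def by blast
  qed
  ultimately show ?thesis using T(1) by (intro card_inj_on_le) auto
qed

lemma lcoset_transversal_Int_card_le:
  assumes K: "subgroup K G" and D: "subgroup D G" "D \<subseteq> A" and A: "subgroup A G"
    and T: "finite T" "lcoset_transversal G K D T"
    and ncov: "\<not> (\<exists>C. lcoset_cover G K A C \<and> card C \<le> m)" and c: "c \<in> K"
  shows "Suc m * card (T \<inter> (c <# A)) \<le> card T"
proof -
  have Kc: "K \<subseteq> carrier G" using K subgroup.subset by blast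
  obtain Cs where Cs: "Cs \<subseteq> K" "finite Cs" "card Cs = Suc m" "lcoset_separated G {A} Cs"
    using exists_lcoset_separated_of_index_gt[OF K A ncov] by blast
  have disj: "(T \<inter> (c1 <# A)) \<inter> (T \<inter> (c2 <# A)) = {}"
    if "c1 \<in> Cs" "c2 \<in> Cs" "c1 \<noteq> c2" for c1 c2
  proof (rule ccontr)
    assume "(T \<inter> (c1 <# A)) \<inter> (T \<inter> (c2 <# A)) \<noteq> {}"
    then obtain x where "x \<in> c1 <# A" "x \<in> c2 <# A" by blast
    then have "c1 <# A = c2 <# A" using l_repr_independence[OF _ _ A] that Cs(1) Kc by (metis subsetD)
    then have "c2 \<in> c1 <# A" using lcoset_self[OF A] that Cs(1) Kc by blast
    then show False using Cs(4) that unfolding lcoset_separated_def by blast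
  qed
  have "Suc m * card (T \<inter> (c <# A)) = (\<Sum>c'\<in>Cs. card (T \<inter> (c <# A)))" using Cs(3) by simp
  also have "\<dots> \<le> (\<Sum>c'\<in>Cs. card (T \<inter> (c' <# A)))"
    using lcoset_transversal_Int_card_mono[OF K D A T c] Cs(1) by (intro sum_mono) blast
  also have "\<dots> = card (\<Union>c'\<in>Cs. T \<inter> (c' <# A))"
    using Cs(2) T(1) disj by (intro card_UN_disjoint[symmetric]) auto
  also have "\<dots> \<le> card T" using T(1) by (intro card_mono) auto
  finally show ?thesis .
qed

lemma set_mult_eq_image: "T <#> Y = (\<lambda>(t, y). t \<otimes> y) ` (T \<times> Y)"
  unfolding set_mult_def by auto

lemma card_set_mult_transversal:
  assumes D: "subgroup D G" and T: "T \<subseteq> carrier G" "lcoset_separated G {D} T" and Y: "Y \<subseteq> D"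
  shows "card (T <#> Y) = card T * card Y"
proof -
  have "inj_on (\<lambda>(t, y). t \<otimes> y) (T \<times> Y)"
  proof (rule inj_onI, clarify)
    fix t y t' y' assume ty: "t \<in> T" "y \<in> Y" "t' \<in> T" "y' \<in> Y" "t \<otimes> y = t' \<otimes> y'"
    have c: "t \<in> carrier G" "y \<in> carrier G" "t' \<in> carrier G" "y' \<in> carrier G"
      using ty T(1) Y subgroup.subset[OF D] by blast+
    have "inv t \<otimes> t' = y \<otimes> inv y'"
      using ty(5) c by (metis inv_solve_left inv_solve_right m_assoc m_closed inv_closed)
    moreover have "y \<otimes> inv y' \<in> D" using ty(2,4) Y D by (blast intro: subgroup.m_closed subgroup.m_inv_closed)
    ultimately have "t' \<in> t <# D" using lcoset_mem_iff[OF D c(1,3)] by simp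
    then have "t = t'" using T(2) ty unfolding lcoset_separated_def by blast
    then show "t = t' \<and> y = y'" using ty(5) c by simp
  qed
  then show ?thesis
    unfolding set_mult_eq_image by (simp add: card_image card_cartesian_product)
qed

lemma card_set_mult_Int_lcoset_le_of_subset:
  assumes A: "subgroup A G" and T: "T \<subseteq> carrier G" "finite T" and Y: "Y \<subseteq> A" "finite Y"
    and c: "c \<in> carrier G"
  shows "card ((T <#> Y) \<inter> (c <# A)) \<le> card (T \<inter> (c <# A)) * card Y"
proof -
  have "(T <#> Y) \<inter> (c <# A) \<subseteq> (T \<inter> (c <# A)) <#> Y"
  proof
    fix x assume "x \<in> (T <#> Y) \<inter> (c <# A)"
    then obtain t y where ty: "t \<in> T" "y \<in> Y" "x = t \<otimes> y" "t \<otimes> y \<in> c <# A"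
      unfolding set_mult_def by blast
    have tc: "t \<in> carrier G" "y \<in> carrier G" using ty T Y subgroup.subset[OF A] by blast+
    have "inv c \<otimes> (t \<otimes> y) \<otimes> inv y \<in> A"
      using ty(2,4) Y(1) lcoset_mem_iff[OF A c] tc A by (blast intro: subgroup.m_closed subgroup.m_inv_closed)
    then have "t \<in> c <# A" using lcoset_mem_iff[OF A c tc(1)] tc c by (simp add: m_assoc)
    then show "x \<in> (T \<inter> (c <# A)) <#> Y" using ty unfolding set_mult_def by blast
  qed
  then have "card ((T <#> Y) \<inter> (c <# A)) \<le> card ((T \<inter> (c <# A)) <#> Y)"
    using T(2) Y(2) by (intro card_mono) (auto simp: set_mult_eq_image)
  also have "\<dots> \<le> card (T \<inter> (c <# A)) * card Y"
    unfolding set_mult_eq_image using card_image_le T(2) Y(2)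
    by (metis card_cartesian_product finite_Int finite_cartesian_product)
  finally show ?thesis .
qed

lemma card_set_mult_Int_lcoset_le_of_separated:
  assumes A: "subgroup A G" and T: "T \<subseteq> carrier G" "finite T"
    and Y: "Y \<subseteq> carrier G" "finite Y" "lcoset_separated G {A} Y" and c: "c \<in> carrier G"
  shows "card ((T <#> Y) \<inter> (c <# A)) \<le> card T"
proof -
  define Q where "Q = {(t, y) \<in> T \<times> Y. t \<otimes> y \<in> c <# A}"
  have finQ: "finite Q" unfolding Q_def using T(2) Y(2) by (auto intro: finite_subset)
  have "inj_on fst Q"
  proof (rule inj_onI, clarify)
    fix t y t' y' assume "(t, y) \<in> Q" "(t', y') \<in> Q" "fst (t, y) = fst (t', y')"
    then have ty: "t \<in> T" "y \<in> Y" "y' \<in> Y" "t \<otimes> y \<in> c <# A" "t \<otimes> y' \<in> c <# A" "t' = t"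
      unfolding Q_def by auto
    have tc: "t \<in> carrier G" "y \<in> carrier G" "y' \<in> carrier G" using ty T(1) Y(1) by blast+
    have "c <# A = (t \<otimes> y) <# A" using l_repr_independence[OF ty(4) c A] .
    then have "inv (t \<otimes> y) \<otimes> (t \<otimes> y') \<in> A" using ty(5) lcoset_mem_iff[OF A] tc by simp
    then have "y' \<in> y <# A"
      using lcoset_mem_iff[OF A tc(2,3)] tc by (simp add: inv_mult_group m_assoc)
    then show "t = t' \<and> y = y'" using Y(3) ty unfolding lcoset_separated_def by blast
  qed
  have "(T <#> Y) \<inter> (c <# A) \<subseteq> (\<lambda>(t, y). t \<otimes> y) ` Q" unfolding Q_def set_mult_def by blast
  then have "card ((T <#> Y) \<inter> (c <# A)) \<le> card ((\<lambda>(t, y). t \<otimes> y) ` Q)"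
    using finQ by (intro card_mono) auto
  also have "\<dots> \<le> card Q" using finQ by (rule card_image_le)
  also have "\<dots> = card (fst ` Q)" using \<open>inj_on fst Q\<close> by (simp add: card_image)
  also have "\<dots> \<le> card T" using T(2) unfolding Q_def by (intro card_mono) auto
  finally show ?thesis .
qed

text \<open>The set is \<open>T <#> Y\<close>, where \<open>T\<close> is a transversal of the intersection \<open>D\<close> of the
  finite-index members of \<open>S\<close>, and \<open>Y \<subseteq> D\<close> consists of \<open>m + 1\<close> points in distinct cosets of
  each infinite-index member (which exist by Neumann's lemma).\<close>

lemma exists_lcoset_sparse_subset:
  assumes K: "subgroup K G" and S: "finite S"
    and SK: "\<And>A. A \<in> S \<Longrightarrow> subgroup A G \<and> A \<subseteq> K \<and> \<not> (\<exists>C. lcoset_cover G K A C \<and> card C \<le> m)"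
  shows "\<exists>F\<subseteq>K. finite F \<and> F \<noteq> {} \<and> (\<forall>A\<in>S. \<forall>c\<in>K. Suc m * card (F \<inter> (c <# A)) \<le> card F)"
proof -
  have Kc: "K \<subseteq> carrier G" using K subgroup.subset by blast
  define I where "I = {A\<in>S. finite_index_in G K A}"
  define J where "J = S - I"
  define D where "D = K \<inter> \<Inter>I"
  have "finite I" "\<And>A. A \<in> I \<Longrightarrow> subgroup A G \<and> finite_index_in G K A"
    using S SK unfolding I_def by auto
  then have D: "subgroup D G" "finite_index_in G K D"
    unfolding D_def using finite_index_in_Inter[OF K] by blast+
  have DK: "D \<subseteq> K" and DI: "\<And>A. A \<in> I \<Longrightarrow> D \<subseteq> A" unfolding D_def by blast+
  obtain T where T: "finite T" "lcoset_transversal G K D T"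
    using exists_lcoset_transversal[OF D(1,2) Kc] by blast
  have TK: "T \<subseteq> K" and T1: "T \<noteq> {}"
    using T(2) subgroup.one_closed[OF K] unfolding lcoset_transversal_def lcoset_cover_def by blast+
  have "finite J" "\<And>A. A \<in> J \<Longrightarrow> subgroup A G \<and> \<not> finite_index_in G K A"
    using S SK unfolding J_def I_def by auto
  then obtain Y where Y: "Y \<subseteq> D" "finite Y" "card Y = (if J = {} then 1 else Suc m)"
    "lcoset_separated G J Y"
    using exists_lcoset_separated_in_finite_index[OF K D(1) DK D(2)] by blast
  define F where "F = T <#> Y"
  have cardF: "card F = card T * card Y"
    unfolding F_def using card_set_mult_transversal[OF D(1) _ _ Y(1)] T(2) TK Kc
    unfolding lcoset_transversal_def by blast
  have "F \<subseteq> K"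
    unfolding F_def set_mult_def using TK Y(1) DK subgroup.m_closed[OF K] by blast
  moreover have "finite F" unfolding F_def set_mult_eq_image using T(1) Y(2) by simp
  moreover have "F \<noteq> {}" using cardF T1 T(1) Y(3) by (auto split: if_splits)
  moreover have "Suc m * card (F \<inter> (c <# A)) \<le> card F" if A: "A \<in> S" and c: "c \<in> K" for A c
  proof (cases "A \<in> I")
    case True
    have Asg: "subgroup A G" and ncov: "\<not> (\<exists>C. lcoset_cover G K A C \<and> card C \<le> m)"
      using SK A by blast+
    have "card (F \<inter> (c <# A)) \<le> card (T \<inter> (c <# A)) * card Y"
      unfolding F_def using card_set_mult_Int_lcoset_le_of_subset[OF Asg _ T(1) _ Y(2), of c]
        TK Y(1) DI[OF True] Kc c by blast
    then have "Suc m * card (F \<inter> (c <# A)) \<le> Suc m * card (T \<inter> (c <# A)) * card Y"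
      by (metis mult.assoc mult_le_mono2)
    also have "\<dots> \<le> card T * card Y"
      using lcoset_transversal_Int_card_le[OF K D(1) DI[OF True] Asg T ncov c] by simp
    finally show ?thesis using cardF by simp
  next
    case False
    then have "A \<in> J" "J \<noteq> {}" using A unfolding J_def by blast+
    then have "card Y = Suc m" "lcoset_separated G {A} Y"
      using Y(3,4) unfolding lcoset_separated_def by auto
    moreover have "card (F \<inter> (c <# A)) \<le> card T"
      unfolding F_def using card_set_mult_Int_lcoset_le_of_separated[OF _ _ T(1) _ Y(2)]
        SK A TK Y(1) DK Kc c \<open>lcoset_separated G {A} Y\<close> by blast
    ultimately show ?thesis using cardF by (metis mult.commute mult_le_mono2)
  qed
  ultimately show ?thesis by blast
qed

lemma conj_class_subset_of_lcoset_cover: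
  assumes K: "subgroup K G" and y: "y \<in> carrier G" and A: "A \<subseteq> carrier G"
    and comm: "\<And>a. a \<in> A \<Longrightarrow> a \<otimes> y = y \<otimes> a" and C: "lcoset_cover G K A C"
  shows "{g \<otimes> y \<otimes> inv g | g. g \<in> K} \<subseteq> (\<lambda>c. c \<otimes> y \<otimes> inv c) ` C"
proof clarify
  fix g assume "g \<in> K"
  then obtain c a where ca: "c \<in> C" "a \<in> A" "g = c \<otimes> a"
    using C unfolding lcoset_cover_def l_coset_def by blast
  have c: "c \<in> carrier G" "a \<in> carrier G"
    using ca C subgroup.subset[OF K] A unfolding lcoset_cover_def by blast+
  have "g \<otimes> y \<otimes> inv g = c \<otimes> (a \<otimes> y \<otimes> inv a) \<otimes> inv c"
    using ca(3) c y by (simp add: m_assoc inv_mult_group)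
  also have "a \<otimes> y \<otimes> inv a = y \<otimes> a \<otimes> inv a" by (simp only: comm[OF ca(2)])
  also have "\<dots> = y" using c y by (simp add: m_assoc)
  finally show "g \<otimes> y \<otimes> inv g \<in> (\<lambda>c. c \<otimes> y \<otimes> inv c) ` C" using ca(1) by blast
qed

lemma card_rcosets_le_of_lcoset_cover:
  assumes K: "subgroup K G" and A: "subgroup A G" and AN: "A \<subseteq> N" and NK: "N \<subseteq> K"
    and N: "\<And>g h. g \<in> N \<Longrightarrow> h \<in> N \<Longrightarrow> g \<otimes> h \<in> N" and C: "lcoset_cover G K A C"
  shows "finite (rcosets\<^bsub>G\<lparr>carrier := K\<rparr>\<^esub> N) \<and> card (rcosets\<^bsub>G\<lparr>carrier := K\<rparr>\<^esub> N) \<le> card C"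
proof -
  have Kc: "K \<subseteq> carrier G" using K subgroup.subset by blast
  have Nc: "N \<subseteq> carrier G" using NK Kc by blast
  have absorb: "N #> b = N" if "b \<in> A" for b
  proof
    have b: "b \<in> carrier G" "inv b \<in> A"
      using subgroup.subset[OF A] subgroup.m_inv_closed[OF A that] that by blast+
    show "N #> b \<subseteq> N" using N AN that unfolding r_coset_def by auto
    show "N \<subseteq> N #> b"
    proof
      fix n assume n: "n \<in> N"
      have "n \<in> carrier G" using n Nc by blast
      then have "n = (n \<otimes> inv b) \<otimes> b" using b by (simp add: m_assoc)
      moreover have "n \<otimes> inv b \<in> N" using N n AN b(2) by blast
      ultimately show "n \<in> N #> b" unfolding r_coset_def by blast
    qed
  qed
  have sub: "rcosets\<^bsub>G\<lparr>carrier := K\<rparr>\<^esub> N \<subseteq> (\<lambda>c. N #> inv c) ` C"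
  proof
    fix X assume "X \<in> rcosets\<^bsub>G\<lparr>carrier := K\<rparr>\<^esub> N"
    then obtain x where x: "x \<in> K" "X = N #> x" unfolding RCOSETS_def r_coset_def by auto
    have "inv x \<in> K" using subgroup.m_inv_closed[OF K x(1)] .
    then obtain c a where ca: "c \<in> C" "a \<in> A" "inv x = c \<otimes> a"
      using C unfolding lcoset_cover_def l_coset_def by blast
    have c: "c \<in> carrier G" "a \<in> carrier G" "x \<in> carrier G"
      using ca(1,2) x(1) C subgroup.subset[OF A] Kc unfolding lcoset_cover_def by blast+
    have "x = inv a \<otimes> inv c" using ca(3) c by (metis inv_inv inv_mult_group)
    then have "N #> x = (N #> inv a) #> inv c" using c Nc by (simp add: coset_mult_assoc)
    also have "\<dots> = N #> inv c" using absorb subgroup.m_inv_closed[OF A ca(2)] by simp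
    finally show "X \<in> (\<lambda>c. N #> inv c) ` C" using x(2) ca(1) by blast
  qed
  have "finite C" using C unfolding lcoset_cover_def by blast
  then have "finite ((\<lambda>c. N #> inv c) ` C)" "card ((\<lambda>c. N #> inv c) ` C) \<le> card C"
    by (simp_all add: card_image_le)
  then show ?thesis using finite_subset[OF sub] card_mono[OF _ sub] by linarith
qed

end

section \<open>Identities in groups\<close>

context group
begin

lemma conj_mult_distrib:
  "g \<in> carrier G \<Longrightarrow> x \<in> carrier G \<Longrightarrow> y \<in> carrier G \<Longrightarrow>
    g \<otimes> (x \<otimes> y) \<otimes> inv g = (g \<otimes> x \<otimes> inv g) \<otimes> (g \<otimes> y \<otimes> inv g)"
  by (simp add: m_assoc)

lemma inv_conj: "g \<in> carrier G \<Longrightarrow> x \<in> carrier G \<Longrightarrow> inv (g \<otimes> x \<otimes> inv g) = g \<otimes> inv x \<otimes> inv g"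
  by (simp add: m_assoc inv_mult_group)

lemma conj_cancel: "g \<in> carrier G \<Longrightarrow> x \<in> carrier G \<Longrightarrow> inv g \<otimes> (g \<otimes> x \<otimes> inv g) \<otimes> g = x"
  by (simp add: m_assoc)

lemma conj_eq_of_commute:
  assumes "g \<in> carrier G" "x \<in> carrier G" "g \<otimes> x = x \<otimes> g"
  shows "g \<otimes> x \<otimes> inv g = x"
  using assms by (simp add: m_assoc)

lemma inv_conj_eq_of_commute:
  assumes "g \<in> carrier G" "x \<in> carrier G" "g \<otimes> x = x \<otimes> g"
  shows "inv g \<otimes> x \<otimes> g = x"
proof -
  have "inv g \<otimes> x \<otimes> g = inv g \<otimes> (g \<otimes> x)" using assms by (simp add: m_assoc)
  then show ?thesis using assms(1,2) by simp
qed

lemma mult_interchange: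
  assumes "a \<in> carrier G" "p \<in> carrier G" "b \<in> carrier G" "q \<in> carrier G" "p \<otimes> b = b \<otimes> p"
  shows "(a \<otimes> p) \<otimes> (b \<otimes> q) = (a \<otimes> b) \<otimes> (p \<otimes> q)"
proof -
  have "(a \<otimes> p) \<otimes> (b \<otimes> q) = a \<otimes> ((p \<otimes> b) \<otimes> q)" using assms(1-4) by (simp add: m_assoc)
  also have "\<dots> = (a \<otimes> b) \<otimes> (p \<otimes> q)" using assms by (simp add: m_assoc)
  finally show ?thesis .
qed

lemma inv_mult_of_commute:
  assumes "a \<in> carrier G" "p \<in> carrier G" "a \<otimes> p = p \<otimes> a"
  shows "inv (a \<otimes> p) = inv a \<otimes> inv p"
  using assms by (simp add: inv_mult_group)

lemma conj_quotient:
  assumes "g \<in> carrier G" "c \<in> carrier G" "s \<in> carrier G"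
  shows "(inv g \<otimes> s \<otimes> g) \<otimes> inv (inv (g \<otimes> c) \<otimes> s \<otimes> (g \<otimes> c))
       = inv g \<otimes> (s \<otimes> (g \<otimes> inv c \<otimes> inv g) \<otimes> inv s) \<otimes> g \<otimes> c"
  using assms by (simp add: m_assoc inv_mult_group)

lemma conj_mult_assoc:
  "a \<in> carrier G \<Longrightarrow> p \<in> carrier G \<Longrightarrow> z \<in> carrier G \<Longrightarrow>
    (a \<otimes> p) \<otimes> z \<otimes> inv (a \<otimes> p) = a \<otimes> (p \<otimes> z \<otimes> inv p) \<otimes> inv a"
  by (simp add: m_assoc inv_mult_group)

lemma commute_of_commutator_one:
  assumes "x \<in> carrier G" "y \<in> carrier G" "x \<otimes> y \<otimes> inv x \<otimes> inv y = \<one>"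
  shows "x \<otimes> y = y \<otimes> x"
proof -
  have "x \<otimes> y = (x \<otimes> y \<otimes> inv x \<otimes> inv y) \<otimes> (y \<otimes> x)" using assms(1,2) by (simp add: m_assoc)
  then show ?thesis using assms by simp
qed

lemma commute_inv:
  assumes "x \<in> carrier G" "y \<in> carrier G" "x \<otimes> y = y \<otimes> x"
  shows "x \<otimes> inv y = inv y \<otimes> x"
proof -
  have "inv y \<otimes> (x \<otimes> y) \<otimes> inv y = inv y \<otimes> (y \<otimes> x) \<otimes> inv y" using assms(3) by simp
  then show ?thesis using assms(1,2) by (simp add: m_assoc)
qed

lemma commutator_eq_of_commute:
  assumes c: "a \<in> carrier G" "p \<in> carrier G" "q \<in> carrier G" "b \<in> carrier G"
    and h: "a \<otimes> p = p \<otimes> a" "p \<otimes> q = q \<otimes> p" "p \<otimes> b = b \<otimes> p" "q \<otimes> a = a \<otimes> q" "q \<otimes> b = b \<otimes> q"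
  shows "(a \<otimes> p) \<otimes> (q \<otimes> b) \<otimes> inv (a \<otimes> p) \<otimes> inv (q \<otimes> b) = a \<otimes> b \<otimes> inv a \<otimes> inv b"
proof -
  let ?x = "b \<otimes> inv a \<otimes> inv b"
  have "p \<otimes> (q \<otimes> b) = (q \<otimes> b) \<otimes> p" using c h(2,3) by (metis m_assoc)
  then have "(a \<otimes> p) \<otimes> (q \<otimes> b) \<otimes> inv (a \<otimes> p) = a \<otimes> (q \<otimes> b) \<otimes> inv a"
    using conj_mult_assoc conj_eq_of_commute c by simp
  moreover have "q \<otimes> ?x = ?x \<otimes> q"
  proof -
    have qa: "q \<otimes> inv a = inv a \<otimes> q" and qb: "q \<otimes> inv b = inv b \<otimes> q"
      using commute_inv[OF c(3) c(1) h(4)] commute_inv[OF c(3) c(4) h(5)] .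
    have "q \<otimes> ?x = ((b \<otimes> q) \<otimes> inv a) \<otimes> inv b" using c by (simp add: m_assoc[symmetric] h(5))
    also have "(b \<otimes> q) \<otimes> inv a = b \<otimes> (inv a \<otimes> q)" using c by (simp add: m_assoc qa)
    also have "b \<otimes> (inv a \<otimes> q) \<otimes> inv b = b \<otimes> (inv a \<otimes> (q \<otimes> inv b))" using c by (simp add: m_assoc)
    also have "\<dots> = ?x \<otimes> q" using c by (simp add: m_assoc qb)
    finally show ?thesis .
  qed
  then have "q \<otimes> ?x \<otimes> inv q = ?x" using c by (intro conj_eq_of_commute) auto
  moreover have "a \<otimes> (q \<otimes> b) \<otimes> inv a \<otimes> inv (q \<otimes> b) = a \<otimes> (q \<otimes> ?x \<otimes> inv q)"
    using c by (simp add: m_assoc inv_mult_group)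
  ultimately show ?thesis using c by (simp add: m_assoc)
qed

lemma inv_conj_mult_distrib:
  "g \<in> carrier G \<Longrightarrow> x \<in> carrier G \<Longrightarrow> y \<in> carrier G \<Longrightarrow>
    inv g \<otimes> (x \<otimes> y) \<otimes> g = (inv g \<otimes> x \<otimes> g) \<otimes> (inv g \<otimes> y \<otimes> g)"
  by (simp add: m_assoc)

lemma conj_by_conjugator:
  assumes c: "k \<in> carrier G" "s \<in> carrier G" "\<alpha> \<in> carrier G" "\<beta> \<in> carrier G"
    and kp: "k \<otimes> (s \<otimes> \<beta> \<otimes> inv s) = (s \<otimes> \<beta> \<otimes> inv s) \<otimes> k"
    and kq: "k \<otimes> (inv s \<otimes> (k \<otimes> \<alpha> \<otimes> inv k) \<otimes> s) = (inv s \<otimes> (k \<otimes> \<alpha> \<otimes> inv k) \<otimes> s) \<otimes> k"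
  shows "inv (inv k \<otimes> s \<otimes> k) \<otimes> (\<alpha> \<otimes> (s \<otimes> \<beta> \<otimes> inv s)) \<otimes> (inv k \<otimes> s \<otimes> k)
       = (inv s \<otimes> (k \<otimes> \<alpha> \<otimes> inv k) \<otimes> s) \<otimes> (inv k \<otimes> \<beta> \<otimes> k)"
proof -
  define p where "p = s \<otimes> \<beta> \<otimes> inv s"
  define q where "q = inv s \<otimes> (k \<otimes> \<alpha> \<otimes> inv k) \<otimes> s"
  have pq: "p \<in> carrier G" "q \<in> carrier G" unfolding p_def q_def using c by simp_all
  have "inv (inv k \<otimes> s \<otimes> k) \<otimes> (\<alpha> \<otimes> p) \<otimes> (inv k \<otimes> s \<otimes> k)
      = inv k \<otimes> (inv s \<otimes> (k \<otimes> (\<alpha> \<otimes> p) \<otimes> inv k) \<otimes> s) \<otimes> k"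
    using c pq by (simp add: m_assoc inv_mult_group)
  also have "k \<otimes> (\<alpha> \<otimes> p) \<otimes> inv k = (k \<otimes> \<alpha> \<otimes> inv k) \<otimes> p"
    using conj_mult_distrib conj_eq_of_commute[OF c(1) pq(1) kp[folded p_def]] c pq by simp
  also have "inv s \<otimes> ((k \<otimes> \<alpha> \<otimes> inv k) \<otimes> p) \<otimes> s = q \<otimes> \<beta>"
    unfolding q_def p_def using inv_conj_mult_distrib conj_cancel c by simp
  also have "inv k \<otimes> (q \<otimes> \<beta>) \<otimes> k = q \<otimes> (inv k \<otimes> \<beta> \<otimes> k)"
    using inv_conj_mult_distrib inv_conj_eq_of_commute[OF c(1) pq(2) kq[folded q_def]] c pq by simp
  finally show ?thesis unfolding p_def q_def .
qed

end

section \<open>Permutations with bounded support\<close>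

definition supported_on :: "'a set \<Rightarrow> ('a \<Rightarrow> 'a) \<Rightarrow> 'a set \<Rightarrow> bool" where
  "supported_on \<Omega> f X \<longleftrightarrow> (\<forall>x\<in>\<Omega> - X. f x = x)"

lemma Rist_eq: "Rist \<Omega> G X = {g \<in> G. supported_on \<Omega> g X}"
  unfolding Rist_def supported_on_def by auto

locale sym_group =
  fixes \<Omega> :: "'a set"
begin

abbreviation pmult (infixl \<open>\<cdot>\<close> 70) where "f \<cdot> g \<equiv> f \<otimes>\<^bsub>BijGroup \<Omega>\<^esub> g"
abbreviation pinv where "pinv f \<equiv> inv\<^bsub>BijGroup \<Omega>\<^esub> f"
abbreviation pone where "pone \<equiv> \<one>\<^bsub>BijGroup \<Omega>\<^esub>"
abbreviation Perm where "Perm \<equiv> carrier (BijGroup \<Omega>)"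

sublocale Sym: group "BijGroup \<Omega>" by (rule group_BijGroup)

lemma pmult_apply: "f \<in> Perm \<Longrightarrow> g \<in> Perm \<Longrightarrow> x \<in> \<Omega> \<Longrightarrow> (f \<cdot> g) x = f (g x)"
  by (simp add: BijGroup_def compose_def)

lemma pone_apply: "x \<in> \<Omega> \<Longrightarrow> pone x = x"
  by (simp add: BijGroup_def)

lemma Perm_apply_closed: "f \<in> Perm \<Longrightarrow> x \<in> \<Omega> \<Longrightarrow> f x \<in> \<Omega>"
  by (auto simp: BijGroup_def Bij_def bij_betw_def)

lemma Perm_inj: "f \<in> Perm \<Longrightarrow> x \<in> \<Omega> \<Longrightarrow> y \<in> \<Omega> \<Longrightarrow> f x = f y \<Longrightarrow> x = y"
  by (auto simp: BijGroup_def Bij_def bij_betw_def inj_on_def)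

lemma Perm_eq_Bij: "Perm = Bij \<Omega>"
  by (simp add: BijGroup_def)

lemma pinv_eq: "f \<in> Perm \<Longrightarrow> x \<in> \<Omega> \<Longrightarrow> pinv f x = inv_into \<Omega> f x"
  by (simp add: inv_BijGroup Perm_eq_Bij)

lemma apply_pinv: "f \<in> Perm \<Longrightarrow> x \<in> \<Omega> \<Longrightarrow> f (pinv f x) = x"
  by (simp add: pinv_eq) (auto simp: BijGroup_def Bij_def bij_betw_def f_inv_into_f)

lemma pinv_apply: "f \<in> Perm \<Longrightarrow> x \<in> \<Omega> \<Longrightarrow> pinv f (f x) = x"
  by (simp add: pinv_eq Perm_apply_closed) (auto simp: BijGroup_def Bij_def bij_betw_def)

lemma Perm_eqI: "f \<in> Perm \<Longrightarrow> g \<in> Perm \<Longrightarrow> (\<And>x. x \<in> \<Omega> \<Longrightarrow> f x = g x) \<Longrightarrow> f = g"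
  by (auto simp: BijGroup_def Bij_def intro: extensionalityI)

lemma pmult_image: "f \<in> Perm \<Longrightarrow> g \<in> Perm \<Longrightarrow> X \<subseteq> \<Omega> \<Longrightarrow> (f \<cdot> g) ` X = f ` g ` X"
  by (force simp: pmult_apply)

abbreviation supported where "supported f X \<equiv> supported_on \<Omega> f X"

lemma supported_on_fixes: "supported f X \<Longrightarrow> x \<in> \<Omega> \<Longrightarrow> x \<notin> X \<Longrightarrow> f x = x"
  unfolding supported_on_def by blast

lemma supported_on_mono: "supported f X \<Longrightarrow> X \<subseteq> Y \<Longrightarrow> supported f Y"
  unfolding supported_on_def by blast

lemma supported_on_pone: "supported pone X"
  unfolding supported_on_def by (simp add: pone_apply)

lemma supported_on_pmult:
  "f \<in> Perm \<Longrightarrow> g \<in> Perm \<Longrightarrow> supported f X \<Longrightarrow> supported g X \<Longrightarrow> supported (f \<cdot> g) X"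
  unfolding supported_on_def by (simp add: pmult_apply)

lemma supported_on_pinv:
  assumes "f \<in> Perm" "supported f X"
  shows "supported (pinv f) X"
  unfolding supported_on_def
proof
  fix x assume "x \<in> \<Omega> - X"
  then show "pinv f x = x" using assms pinv_apply[of f x] supported_on_fixes[of f X x] by simp
qed

lemma supported_on_apply_closed:
  assumes f: "f \<in> Perm" "supported f X" and x: "x \<in> \<Omega>" "x \<in> X"
  shows "f x \<in> X"
proof (rule ccontr)
  assume "f x \<notin> X"
  then have "f (f x) = f x" using f Perm_apply_closed[OF f(1) x(1)] supported_on_fixes by blast
  then have "f x = x" using Perm_inj[OF f(1) Perm_apply_closed[OF f(1) x(1)] x(1)] by blast
  then show False using \<open>f x \<notin> X\<close> x by simp
qed

lemma supported_on_image_eq: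
  assumes f: "f \<in> Perm" "supported f X" and X: "X \<subseteq> \<Omega>"
  shows "f ` X = X"
proof
  show "f ` X \<subseteq> X" using supported_on_apply_closed[OF f] X by blast
  show "X \<subseteq> f ` X"
  proof
    fix y assume y: "y \<in> X"
    have "pinv f y \<in> X"
      using supported_on_apply_closed[OF _ supported_on_pinv[OF f]] f(1) X y by blast
    then show "y \<in> f ` X" using apply_pinv[OF f(1)] X y by (metis image_eqI subsetD)
  qed
qed

lemma supported_on_conj:
  assumes s: "s \<in> Perm" and d: "d \<in> Perm" "supported d X"
  shows "supported (s \<cdot> d \<cdot> pinv s) (s ` X)"
  unfolding supported_on_def
proof
  fix x assume x: "x \<in> \<Omega> - s ` X"
  have y: "pinv s x \<in> \<Omega>" using Perm_apply_closed[OF Sym.inv_closed[OF s]] x by blast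
  have "pinv s x \<notin> X"
  proof
    assume "pinv s x \<in> X"
    then have "s (pinv s x) \<in> s ` X" by (rule imageI)
    then show False using x apply_pinv[OF s] by simp
  qed
  then have "d (pinv s x) = pinv s x" using d(2) y supported_on_fixes by blast
  then show "(s \<cdot> d \<cdot> pinv s) x = x" using s d(1) x y by (simp add: pmult_apply apply_pinv)
qed

lemma supported_on_disjoint_commute:
  assumes f: "f \<in> Perm" "supported f X" and g: "g \<in> Perm" "supported g Y"
    and XY: "X \<inter> Y = {}"
  shows "f \<cdot> g = g \<cdot> f"
proof (rule Perm_eqI)
  fix x assume x: "x \<in> \<Omega>"
  consider "x \<in> X" | "x \<in> Y" | "x \<notin> X" "x \<notin> Y" using XY by blast
  then show "(f \<cdot> g) x = (g \<cdot> f) x"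
  proof cases
    case 1
    then have "g x = x" "g (f x) = f x"
      using supported_on_fixes[OF g(2)] supported_on_apply_closed[OF f x] Perm_apply_closed[OF f(1) x]
        XY x by blast+
    then show ?thesis using f g x by (simp add: pmult_apply)
  next
    case 2
    then have "f x = x" "f (g x) = g x"
      using supported_on_fixes[OF f(2)] supported_on_apply_closed[OF g x] Perm_apply_closed[OF g(1) x]
        XY x by blast+
    then show ?thesis using f g x by (simp add: pmult_apply)
  next
    case 3
    then show ?thesis
      using f g x supported_on_fixes[OF f(2) x] supported_on_fixes[OF g(2) x] by (simp add: pmult_apply)
  qed
qed (use f g in auto)

lemma conj_set_eq: "conj_set \<Omega> g N = (\<lambda>h. g \<cdot> h \<cdot> pinv g) ` N"
  unfolding conj_set_def by auto

lemma normalizer_in_pmult: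
  assumes K: "subgroup K (BijGroup \<Omega>)" and N: "N \<subseteq> Perm"
    and g: "g \<in> normalizer_in \<Omega> K N" and h: "h \<in> normalizer_in \<Omega> K N"
  shows "g \<cdot> h \<in> normalizer_in \<Omega> K N"
proof -
  have gh: "g \<in> K" "h \<in> K" "g \<in> Perm" "h \<in> Perm"
    using g h subgroup.subset[OF K] unfolding normalizer_in_def by auto
  have "(g \<cdot> h) \<cdot> x \<cdot> pinv (g \<cdot> h) = g \<cdot> (h \<cdot> x \<cdot> pinv h) \<cdot> pinv g" if "x \<in> N" for x
    using Sym.conj_mult_assoc gh(3,4) that N by blast
  then have "(\<lambda>x. (g \<cdot> h) \<cdot> x \<cdot> pinv (g \<cdot> h)) ` N = (\<lambda>x. g \<cdot> x \<cdot> pinv g) ` (\<lambda>x. h \<cdot> x \<cdot> pinv h) ` N"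
    unfolding image_image by (rule image_cong[OF refl])
  also have "\<dots> = N" using g h unfolding normalizer_in_def conj_set_eq by simp
  finally show ?thesis
    using subgroup.m_closed[OF K gh(1,2)] unfolding normalizer_in_def conj_set_eq by blast
qed

lemma FC_le_of_lcoset_cover:
  assumes K: "subgroup K (BijGroup \<Omega>)" and y: "y \<in> K" and A: "A \<subseteq> K"
    and comm: "\<And>a. a \<in> A \<Longrightarrow> a \<cdot> y = y \<cdot> a"
    and C: "lcoset_cover (BijGroup \<Omega>) K A C" "card C \<le> m"
  shows "y \<in> FC_le \<Omega> m K"
proof -
  have "{g \<cdot> y \<cdot> pinv g | g. g \<in> K} \<subseteq> (\<lambda>c. c \<cdot> y \<cdot> pinv c) ` C"
    using Sym.conj_class_subset_of_lcoset_cover[OF K _ _ comm C(1)] y A subgroup.subset[OF K] by blast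
  moreover have finC: "finite C" using C(1) unfolding lcoset_cover_def by blast
  ultimately have "finite {g \<cdot> y \<cdot> pinv g | g. g \<in> K}"
    "card {g \<cdot> y \<cdot> pinv g | g. g \<in> K} \<le> card ((\<lambda>c. c \<cdot> y \<cdot> pinv c) ` C)"
    using finite_subset card_mono by blast+
  moreover have "card ((\<lambda>c. c \<cdot> y \<cdot> pinv c) ` C) \<le> m" using card_image_le[OF finC, of "\<lambda>c. c \<cdot> y \<cdot> pinv c"] C(2) by linarith
  ultimately show ?thesis unfolding FC_le_def using y by simp
qed

end

section \<open>The confining configuration\<close>

lemma PiE_eq_fun_upd_of_restrict_eq:
  assumes "\<gamma> \<in> PiE I F" "\<gamma>0 \<in> PiE I F" "i \<in> I" "restrict \<gamma> (I - {i}) = restrict \<gamma>0 (I - {i})"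
  shows "\<gamma> = \<gamma>0(i := \<gamma> i)"
proof
  fix j
  show "\<gamma> j = (\<gamma>0(i := \<gamma> i)) j"
  proof (cases "j \<in> I - {i}")
    case True
    then show ?thesis using fun_cong[OF assms(4), of j] by auto
  next
    case False
    then show ?thesis using assms(1,2) by (cases "j = i") (auto simp: PiE_iff extensional_def)
  qed
qed

lemma card_PiE_sparse_slices:
  assumes I: "finite I" "i \<in> I" and F: "\<And>j. j \<in> I \<Longrightarrow> finite (F j)" and Q: "Q \<subseteq> PiE I F"
    and sparse: "\<And>\<gamma>. \<gamma> \<in> Q \<Longrightarrow> k * card {x \<in> F i. \<gamma>(i := x) \<in> Q} \<le> card (F i)"
  shows "k * card Q \<le> card (PiE I F)"
proof -
  define slice where "slice \<rho> = {\<gamma> \<in> Q. restrict \<gamma> (I - {i}) = \<rho>}" for \<rho>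
  have finR: "finite (PiE (I - {i}) F)" using I F by (intro finite_PiE) auto
  have "finite (PiE I F)" using I F by (intro finite_PiE) auto
  then have finQ: "finite Q" using finite_subset[OF Q] by blast
  have Q_slices: "Q \<subseteq> (\<Union>\<rho>\<in>PiE (I - {i}) F. slice \<rho>)"
  proof
    fix \<gamma> assume "\<gamma> \<in> Q"
    then have "restrict \<gamma> (I - {i}) \<in> PiE (I - {i}) F" "\<gamma> \<in> slice (restrict \<gamma> (I - {i}))"
      using Q unfolding slice_def by (auto simp: PiE_iff)
    then show "\<gamma> \<in> (\<Union>\<rho>\<in>PiE (I - {i}) F. slice \<rho>)" by blast
  qed
  have slice_le: "k * card (slice \<rho>) \<le> card (F i)" for \<rho>
  proof (cases "slice \<rho> = {}")
    case False
    then obtain \<gamma>0 where \<gamma>0: "\<gamma>0 \<in> slice \<rho>" by blast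
    let ?X = "{x \<in> F i. \<gamma>0(i := x) \<in> Q}"
    have "slice \<rho> \<subseteq> (\<lambda>x. \<gamma>0(i := x)) ` ?X"
    proof
      fix \<gamma> assume \<gamma>: "\<gamma> \<in> slice \<rho>"
      have PiE: "\<gamma> \<in> PiE I F" "\<gamma>0 \<in> PiE I F" and eq: "restrict \<gamma> (I - {i}) = restrict \<gamma>0 (I - {i})"
        using \<gamma> \<gamma>0 Q unfolding slice_def by auto
      have "\<gamma> = \<gamma>0(i := \<gamma> i)" by (rule PiE_eq_fun_upd_of_restrict_eq[OF PiE I(2) eq])
      moreover have "\<gamma> i \<in> F i" using PiE(1) I(2) by blast
      moreover have "\<gamma> \<in> Q" using \<gamma> unfolding slice_def by blast
      ultimately have "\<gamma> i \<in> ?X" by simp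
      then show "\<gamma> \<in> (\<lambda>x. \<gamma>0(i := x)) ` ?X"
        using image_eqI[where f = "\<lambda>x. \<gamma>0(i := x)", OF \<open>\<gamma> = \<gamma>0(i := \<gamma> i)\<close>] by blast
    qed
    moreover have "finite ?X" using F[OF I(2)] by simp
    ultimately have "card (slice \<rho>) \<le> card ((\<lambda>x. \<gamma>0(i := x)) ` ?X)"
      by (intro card_mono) auto
    also have "\<dots> \<le> card ?X" by (rule card_image_le) fact
    finally have "k * card (slice \<rho>) \<le> k * card ?X" by simp
    also have "\<dots> \<le> card (F i)" using sparse \<gamma>0 unfolding slice_def by blast
    finally show ?thesis .
  qed simp
  have "finite (slice \<rho>)" for \<rho> using finQ unfolding slice_def by simp
  then have "card Q \<le> card (\<Union>\<rho>\<in>PiE (I - {i}) F. slice \<rho>)"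
    using finR by (intro card_mono[OF _ Q_slices]) auto
  also have "\<dots> \<le> (\<Sum>\<rho>\<in>PiE (I - {i}) F. card (slice \<rho>))" by (rule card_UN_le[OF finR])
  finally have "card Q \<le> (\<Sum>\<rho>\<in>PiE (I - {i}) F. card (slice \<rho>))" .
  then have "k * card Q \<le> (\<Sum>\<rho>\<in>PiE (I - {i}) F. k * card (slice \<rho>))"
    by (simp add: sum_distrib_left[symmetric])
  also have "\<dots> \<le> (\<Sum>\<rho>\<in>PiE (I - {i}) F. card (F i))"
    using slice_le by (intro sum_mono)
  also have "\<dots> = card (PiE I F)"
    using I F by (simp add: card_PiE prod.remove[of I i] mult.commute)
  finally show ?thesis .
qed

locale confining_configuration = sym_group +
  fixes n :: nat and H :: "nat \<Rightarrow> ('a \<Rightarrow> 'a) set" and G P :: "('a \<Rightarrow> 'a) set"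
    and W :: "('a \<Rightarrow> 'a) \<Rightarrow> 'a set"
  assumes H_subgroup: "\<And>j. j \<in> {1..n} \<Longrightarrow> subgroup (H j) (BijGroup \<Omega>)"
    and G_subgroup: "subgroup G (BijGroup \<Omega>)"
    and confining: "confining_subset \<Omega> n H G P"
    and displacement: "displacement_configuration \<Omega> P W"
    and Rist_nontrivial: "\<And>\<sigma>. \<sigma> \<in> P \<Longrightarrow> Rist \<Omega> G (W \<sigma>) \<noteq> {pone}"
    and Rist_FC_trivial: "\<And>\<sigma>. \<sigma> \<in> P \<Longrightarrow> FC_le \<Omega> (n * card P) (Rist \<Omega> G (W \<sigma>)) = {pone}"
begin

abbreviation m where "m \<equiv> n * card P"
abbreviation R where "R X \<equiv> Rist \<Omega> G X"
abbreviation blocks where "blocks \<equiv> W ` P"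

definition block_preserving :: "('a \<Rightarrow> 'a) \<Rightarrow> bool" where
  "block_preserving g \<longleftrightarrow> g \<in> G \<and> supported g (\<Union>blocks) \<and> (\<forall>b\<in>blocks. g ` b = b)"

definition conjugators :: "nat \<Rightarrow> ('a \<Rightarrow> 'a) \<Rightarrow> ('a \<Rightarrow> 'a) set" where
  "conjugators j \<sigma> = {g \<in> Perm. pinv g \<cdot> \<sigma> \<cdot> g \<in> H j}"

definition proj :: "nat \<Rightarrow> ('a \<Rightarrow> 'a) \<Rightarrow> ('a \<Rightarrow> 'a) set" where
  "proj j \<sigma> = {\<alpha> \<in> R (W \<sigma>). \<exists>\<beta> \<in> R (W \<sigma>). \<alpha> \<cdot> (\<sigma> \<cdot> \<beta> \<cdot> pinv \<sigma>) \<in> H j}"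

lemma G_Perm: "G \<subseteq> Perm"
  using G_subgroup subgroup.subset by blast

lemma H_Perm: "j \<in> {1..n} \<Longrightarrow> H j \<subseteq> Perm"
  using H_subgroup subgroup.subset by blast

lemma finite_P: "finite P" and P_Perm: "P \<subseteq> Perm"
  and confiningD: "\<And>g. g \<in> G \<Longrightarrow> \<exists>j\<in>{1..n}. conj_set \<Omega> g (H j) \<inter> P \<noteq> {}"
  using confining unfolding confining_subset_def by auto

lemma R_subgroup: "subgroup (R X) (BijGroup \<Omega>)"
proof (rule Sym.subgroupI)
  show "R X \<subseteq> Perm" using G_Perm unfolding Rist_eq by auto
  show "R X \<noteq> {}" using subgroup.one_closed[OF G_subgroup] supported_on_pone unfolding Rist_eq by auto
  fix a b assume "a \<in> R X" "b \<in> R X"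
  then have ab: "a \<in> G" "b \<in> G" "a \<in> Perm" "b \<in> Perm" "supported a X" "supported b X"
    using G_Perm unfolding Rist_eq by auto
  show "pinv a \<in> R X"
    using subgroup.m_inv_closed[OF G_subgroup ab(1)] supported_on_pinv[OF ab(3,5)] unfolding Rist_eq by simp
  show "a \<cdot> b \<in> R X"
    using subgroup.m_closed[OF G_subgroup ab(1,2)] supported_on_pmult[OF ab(3,4,5,6)] unfolding Rist_eq by simp
qed

lemma R_G: "R X \<subseteq> G" and R_Perm: "R X \<subseteq> Perm" and R_supported: "g \<in> R X \<Longrightarrow> supported g X"
  using G_Perm unfolding Rist_eq by auto

lemma displacementD:
  "\<forall>\<sigma>\<in>P. W \<sigma> \<noteq> {} \<and> W \<sigma> \<subseteq> \<Omega>"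
  "\<forall>\<sigma>\<in>P. \<forall>\<rho>\<in>P. W \<sigma> = W \<rho> \<or> W \<sigma> \<inter> W \<rho> = {}"
  "\<forall>\<sigma>\<in>P. \<forall>\<rho>\<in>P. (\<forall>x\<in>W \<rho>. \<sigma> x = x) \<or> \<sigma> ` W \<rho> \<inter> \<Union>blocks = {}"
  "\<forall>\<sigma>\<in>P. \<sigma> ` W \<sigma> \<inter> \<Union>blocks = {} \<and> \<sigma> ` W \<sigma> \<inter> (\<Union>\<alpha>\<in>P. pinv \<sigma> ` W \<alpha>) = {}"
  using displacement unfolding displacement_configuration_def by simp_all

lemma W_subset: "\<sigma> \<in> P \<Longrightarrow> W \<sigma> \<subseteq> \<Omega>"
  using displacementD(1) by simp

lemma W_disjoint: "\<sigma> \<in> P \<Longrightarrow> \<rho> \<in> P \<Longrightarrow> W \<sigma> \<noteq> W \<rho> \<Longrightarrow> W \<sigma> \<inter> W \<rho> = {}"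
  using displacementD(2) by blast

lemma blocks_disjoint: "b \<in> blocks \<Longrightarrow> b' \<in> blocks \<Longrightarrow> b \<noteq> b' \<Longrightarrow> b \<inter> b' = {}"
  using W_disjoint by blast

lemma fix_or_move: "\<sigma> \<in> P \<Longrightarrow> \<rho> \<in> P \<Longrightarrow> (\<forall>x\<in>W \<rho>. \<sigma> x = x) \<or> \<sigma> ` W \<rho> \<inter> \<Union>blocks = {}"
  using displacementD(3) by simp

lemma moves_block: "\<sigma> \<in> P \<Longrightarrow> \<sigma> ` W \<sigma> \<inter> \<Union>blocks = {}"
  using displacementD(4) by simp

lemma moves_block_inv: "\<sigma> \<in> P \<Longrightarrow> \<sigma> ` W \<sigma> \<inter> pinv \<sigma> ` W \<sigma> = {}"
  using displacementD(4) by blast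

lemma moves_block_self: "\<sigma> \<in> P \<Longrightarrow> \<sigma> ` W \<sigma> \<inter> W \<sigma> = {}"
  using moves_block by blast

lemma inv_moves_block_self:
  assumes s: "\<sigma> \<in> P"
  shows "pinv \<sigma> ` W \<sigma> \<inter> W \<sigma> = {}"
proof -
  have "x \<in> \<sigma> ` W \<sigma>" if "x \<in> W \<sigma>" "pinv \<sigma> x \<in> W \<sigma>" for x
  proof -
    have "\<sigma> (pinv \<sigma> x) = x" using apply_pinv P_Perm s that(1) W_subset[OF s] by blast
    then show ?thesis using image_eqI[where f = \<sigma>, OF _ that(2)] by simp
  qed
  then show ?thesis using moves_block_self[OF s] by blast
qed

lemma inv_moves_block:
  assumes s: "\<sigma> \<in> P"
  shows "pinv \<sigma> ` W \<sigma> \<inter> \<Union>blocks = {}"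
proof (rule ccontr)
  assume "pinv \<sigma> ` W \<sigma> \<inter> \<Union>blocks \<noteq> {}"
  then obtain y \<rho> where y: "y \<in> W \<sigma>" "\<rho> \<in> P" "pinv \<sigma> y \<in> W \<rho>" by blast
  have sy: "\<sigma> (pinv \<sigma> y) = y" using apply_pinv P_Perm s y(1) W_subset[OF s] by blast
  from fix_or_move[OF s y(2)] show False
  proof
    assume "\<forall>x\<in>W \<rho>. \<sigma> x = x"
    then have "pinv \<sigma> y = y" using y(3) sy by metis
    then have "y \<in> pinv \<sigma> ` W \<sigma>" using image_eqI[where f = "pinv \<sigma>", OF _ y(1)] by simp
    then show False using y(1) inv_moves_block_self[OF s] by blast
  next
    assume "\<sigma> ` W \<rho> \<inter> \<Union>blocks = {}"
    moreover have "y \<in> \<sigma> ` W \<rho>" using image_eqI[where f = \<sigma>, OF _ y(3)] sy by simp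
    ultimately show False using y(1) s by blast
  qed
qed

lemma conj_supported:
  assumes "\<sigma> \<in> Perm" "b \<in> R X"
  shows "\<sigma> \<cdot> b \<cdot> pinv \<sigma> \<in> Perm" "supported (\<sigma> \<cdot> b \<cdot> pinv \<sigma>) (\<sigma> ` X)"
  using assms R_Perm supported_on_conj R_supported by blast+

lemma R_commute_conj:
  assumes s: "\<sigma> \<in> P" and a: "a \<in> R (W \<sigma>)" and b: "b \<in> R (W \<sigma>)"
  shows "(\<sigma> \<cdot> b \<cdot> pinv \<sigma>) \<cdot> a = a \<cdot> (\<sigma> \<cdot> b \<cdot> pinv \<sigma>)"
  using supported_on_disjoint_commute[OF conj_supported[OF _ b] _ R_supported[OF a]]
    s P_Perm a R_Perm moves_block_self[OF s] by blast

lemma proj_subset: "proj j \<sigma> \<subseteq> R (W \<sigma>)"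
  unfolding proj_def by blast

lemma proj_subgroup:
  assumes j: "j \<in> {1..n}" and s: "\<sigma> \<in> P"
  shows "subgroup (proj j \<sigma>) (BijGroup \<Omega>)"
proof (rule Sym.subgroupI)
  have sP: "\<sigma> \<in> Perm" using s P_Perm by blast
  note Hj = H_subgroup[OF j] and Rs = R_subgroup[of "W \<sigma>"]
  show "proj j \<sigma> \<subseteq> Perm" using proj_subset R_Perm by blast
  have "pone \<cdot> (\<sigma> \<cdot> pone \<cdot> pinv \<sigma>) \<in> H j" using sP subgroup.one_closed[OF Hj] by simp
  then show "proj j \<sigma> \<noteq> {}" using subgroup.one_closed[OF Rs] unfolding proj_def by blast
  fix a b assume "a \<in> proj j \<sigma>" "b \<in> proj j \<sigma>"
  then obtain \<beta>a \<beta>b where ab: "a \<in> R (W \<sigma>)" "\<beta>a \<in> R (W \<sigma>)" "a \<cdot> (\<sigma> \<cdot> \<beta>a \<cdot> pinv \<sigma>) \<in> H j"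
    "b \<in> R (W \<sigma>)" "\<beta>b \<in> R (W \<sigma>)" "b \<cdot> (\<sigma> \<cdot> \<beta>b \<cdot> pinv \<sigma>) \<in> H j"
    unfolding proj_def by blast
  have c: "a \<in> Perm" "\<beta>a \<in> Perm" "b \<in> Perm" "\<beta>b \<in> Perm" using ab R_Perm by blast+
  have "pinv (a \<cdot> (\<sigma> \<cdot> \<beta>a \<cdot> pinv \<sigma>)) = pinv a \<cdot> (\<sigma> \<cdot> pinv \<beta>a \<cdot> pinv \<sigma>)"
    using Sym.inv_mult_of_commute[of a "\<sigma> \<cdot> \<beta>a \<cdot> pinv \<sigma>"] R_commute_conj[OF s ab(1,2)]
      Sym.inv_conj c sP by simp
  then show "pinv a \<in> proj j \<sigma>"
    using subgroup.m_inv_closed[OF Hj ab(3)] subgroup.m_inv_closed[OF Rs] ab(1,2)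
    unfolding proj_def by auto
  have "(a \<cdot> (\<sigma> \<cdot> \<beta>a \<cdot> pinv \<sigma>)) \<cdot> (b \<cdot> (\<sigma> \<cdot> \<beta>b \<cdot> pinv \<sigma>))
      = (a \<cdot> b) \<cdot> (\<sigma> \<cdot> (\<beta>a \<cdot> \<beta>b) \<cdot> pinv \<sigma>)"
    using Sym.mult_interchange[of a "\<sigma> \<cdot> \<beta>a \<cdot> pinv \<sigma>" b "\<sigma> \<cdot> \<beta>b \<cdot> pinv \<sigma>"]
      R_commute_conj[OF s ab(4,2)] Sym.conj_mult_distrib c sP by simp
  then show "a \<cdot> b \<in> proj j \<sigma>"
    using subgroup.m_closed[OF Hj ab(3,6)] subgroup.m_closed[OF Rs] ab(1,2,4,5)
    unfolding proj_def by auto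
qed

text \<open>The quotient of the two conjugates of \<open>\<sigma>\<close> is \<open>w \<cdot> \<gamma>\<close> with \<open>w\<close> supported on \<open>\<sigma> ` W \<sigma>\<close>.\<close>

lemma proj_of_conjugators:
  assumes j: "j \<in> {1..n}" and s: "\<sigma> \<in> P" and g: "block_preserving g" and \<gamma>: "\<gamma> \<in> R (W \<sigma>)"
    and gT: "g \<in> conjugators j \<sigma>" and g\<gamma>T: "g \<cdot> \<gamma> \<in> conjugators j \<sigma>"
  shows "\<gamma> \<in> proj j \<sigma>"
proof -
  have gG: "g \<in> G" and gU: "supported g (\<Union>blocks)" and gW: "g ` W \<sigma> = W \<sigma>"
    using g s unfolding block_preserving_def by auto
  have c: "g \<in> Perm" "\<gamma> \<in> Perm" "\<sigma> \<in> Perm" using gG G_Perm \<gamma> R_Perm s P_Perm by blast+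
  define \<delta> where "\<delta> = g \<cdot> pinv \<gamma> \<cdot> pinv g"
  have "\<delta> \<in> G" unfolding \<delta>_def using gG \<gamma> R_G G_subgroup
    by (blast intro: subgroup.m_closed subgroup.m_inv_closed)
  moreover have "supported \<delta> (W \<sigma>)"
    unfolding \<delta>_def using supported_on_conj[OF c(1) _ supported_on_pinv[OF c(2) R_supported[OF \<gamma>]]] c gW
    by simp
  ultimately have \<delta>R: "\<delta> \<in> R (W \<sigma>)" unfolding Rist_eq by blast
  define w where "w = \<sigma> \<cdot> \<delta> \<cdot> pinv \<sigma>"
  have w: "w \<in> Perm" "supported w (\<sigma> ` W \<sigma>)" unfolding w_def using conj_supported[OF c(3) \<delta>R] by blast+
  have gw: "g \<cdot> w = w \<cdot> g"
    using supported_on_disjoint_commute[OF c(1) gU w] moves_block[OF s] by blast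
  have \<gamma>w: "\<gamma> \<cdot> w = w \<cdot> \<gamma>"
    using supported_on_disjoint_commute[OF c(2) R_supported[OF \<gamma>] w] moves_block_self[OF s] by blast
  have "(pinv g \<cdot> \<sigma> \<cdot> g) \<cdot> pinv (pinv (g \<cdot> \<gamma>) \<cdot> \<sigma> \<cdot> (g \<cdot> \<gamma>)) \<in> H j"
    using gT g\<gamma>T H_subgroup[OF j] unfolding conjugators_def
    by (blast intro: subgroup.m_closed subgroup.m_inv_closed)
  moreover have "(pinv g \<cdot> \<sigma> \<cdot> g) \<cdot> pinv (pinv (g \<cdot> \<gamma>) \<cdot> \<sigma> \<cdot> (g \<cdot> \<gamma>)) = pinv g \<cdot> w \<cdot> g \<cdot> \<gamma>"
    unfolding w_def \<delta>_def by (rule Sym.conj_quotient[OF c])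
  moreover have "pinv g \<cdot> w \<cdot> g = w" by (rule Sym.inv_conj_eq_of_commute[OF c(1) w(1) gw])
  ultimately have "\<gamma> \<cdot> (\<sigma> \<cdot> \<delta> \<cdot> pinv \<sigma>) \<in> H j" using \<gamma>w unfolding w_def by simp
  then show ?thesis unfolding proj_def using \<gamma> \<delta>R by blast
qed

lemma R_mono: "X \<subseteq> Y \<Longrightarrow> R X \<subseteq> R Y"
  unfolding Rist_def by blast

lemma conjugators_of_confining:
  assumes g: "g \<in> G"
  shows "\<exists>j\<in>{1..n}. \<exists>\<sigma>\<in>P. g \<in> conjugators j \<sigma>"
proof -
  obtain j \<sigma> h where j: "j \<in> {1..n}" and h: "h \<in> H j" "\<sigma> = g \<cdot> h \<cdot> pinv g" "\<sigma> \<in> P"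
    using confiningD[OF g] unfolding conj_set_def by blast
  have "g \<in> Perm" "h \<in> Perm" using g G_Perm h(1) H_Perm[OF j] by blast+
  then have "pinv g \<cdot> \<sigma> \<cdot> g = h" unfolding h(2) by (simp add: Sym.conj_cancel)
  then show ?thesis using j h(1,3) \<open>g \<in> Perm\<close> unfolding conjugators_def by auto
qed

definition block_prod :: "('a set \<Rightarrow> 'a \<Rightarrow> 'a) \<Rightarrow> 'a set list \<Rightarrow> 'a \<Rightarrow> 'a" where
  "block_prod \<gamma> bs = foldr (\<lambda>b g. \<gamma> b \<cdot> g) bs pone"

lemma block_prod_Nil [simp]: "block_prod \<gamma> [] = pone"
  and block_prod_Cons [simp]: "block_prod \<gamma> (b # bs) = \<gamma> b \<cdot> block_prod \<gamma> bs"
  unfolding block_prod_def by simp_all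

lemma block_prod_cong: "(\<And>b. b \<in> set bs \<Longrightarrow> \<gamma> b = \<gamma>' b) \<Longrightarrow> block_prod \<gamma> bs = block_prod \<gamma>' bs"
  by (induction bs) auto

lemma block_prod_R:
  assumes "\<forall>b\<in>set bs. \<gamma> b \<in> R b"
  shows "block_prod \<gamma> bs \<in> R (\<Union>(set bs))"
  using assms
proof (induction bs)
  case Nil
  then show ?case using subgroup.one_closed[OF R_subgroup] by simp
next
  case (Cons b bs)
  then have "\<gamma> b \<in> R (\<Union>(set (b # bs)))" "block_prod \<gamma> bs \<in> R (\<Union>(set (b # bs)))"
    using R_mono[of b "\<Union>(set (b # bs))"] R_mono[of "\<Union>(set bs)" "\<Union>(set (b # bs))"] by auto
  then show ?case using subgroup.m_closed[OF R_subgroup] by simp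
qed

lemma R_block_preserving:
  assumes b: "b \<in> blocks" and g: "g \<in> R b"
  shows "block_preserving g"
  unfolding block_preserving_def
proof (intro conjI ballI)
  show "g \<in> G" using g R_G by blast
  show "supported g (\<Union>blocks)" using R_supported[OF g] supported_on_mono b by blast
  fix b' assume b': "b' \<in> blocks"
  have gP: "g \<in> Perm" using g R_Perm by blast
  show "g ` b' = b'"
  proof (cases "b' = b")
    case True
    then show ?thesis using supported_on_image_eq[OF gP R_supported[OF g]] b W_subset by blast
  next
    case False
    then have "\<forall>x\<in>b'. g x = x"
      using supported_on_fixes[OF R_supported[OF g]] blocks_disjoint b b' W_subset by blast
    then show ?thesis by simp
  qed
qed

lemma block_preserving_pmult:
  assumes f: "block_preserving f" and g: "block_preserving g"
  shows "block_preserving (f \<cdot> g)"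
proof -
  have "f \<in> Perm" "g \<in> Perm" using f g G_Perm unfolding block_preserving_def by blast+
  then show ?thesis
    using f g subgroup.m_closed[OF G_subgroup] supported_on_pmult pmult_image W_subset
    unfolding block_preserving_def by auto
qed

lemma block_prod_block_preserving:
  assumes "set bs \<subseteq> blocks" "\<forall>b\<in>set bs. \<gamma> b \<in> R b"
  shows "block_preserving (block_prod \<gamma> bs)"
  using assms
proof (induction bs)
  case Nil
  have "pone ` b = b" if "b \<in> blocks" for b using that W_subset pone_apply by force
  then show ?case
    using subgroup.one_closed[OF G_subgroup] supported_on_pone unfolding block_preserving_def by simp
next
  case (Cons b bs)
  then show ?case using R_block_preserving block_preserving_pmult by simp blast
qed

lemma block_prod_update:
  assumes "distinct bs" "set bs \<subseteq> blocks" "b \<in> set bs" "\<forall>c\<in>set bs. \<gamma> c \<in> R c" "\<delta> \<in> R b"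
  shows "block_prod (\<gamma>(b := \<delta>)) bs = block_prod \<gamma> bs \<cdot> (pinv (\<gamma> b) \<cdot> \<delta>)"
  using assms
proof (induction bs)
  case (Cons c cs)
  have Q: "block_prod \<gamma> cs \<in> R (\<Union>(set cs))" using Cons.prems(4) block_prod_R by simp
  have c: "block_prod \<gamma> cs \<in> Perm" "\<gamma> b \<in> Perm" "\<delta> \<in> Perm" "\<gamma> c \<in> Perm"
    using Q Cons.prems(3-5) R_Perm by auto
  show ?case
  proof (cases "c = b")
    case True
    have bcs: "b \<notin> set cs" using Cons.prems(1) True by simp
    have "b \<inter> b' = {}" if "b' \<in> set cs" for b'
      using blocks_disjoint[of b b'] Cons.prems(2,3) bcs that by auto
    then have "b \<inter> \<Union>(set cs) = {}" by blast
    then have comm: "x \<cdot> block_prod \<gamma> cs = block_prod \<gamma> cs \<cdot> x" if "x \<in> R b" for x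
      using supported_on_disjoint_commute[OF _ R_supported[OF that] c(1) R_supported[OF Q]]
        R_Perm that by blast
    have "block_prod (\<gamma>(b := \<delta>)) cs = block_prod \<gamma> cs"
      using bcs by (intro block_prod_cong) auto
    then have "block_prod (\<gamma>(b := \<delta>)) (c # cs) = \<delta> \<cdot> block_prod \<gamma> cs"
      using True by simp
    also have "\<dots> = \<gamma> b \<cdot> (pinv (\<gamma> b) \<cdot> block_prod \<gamma> cs) \<cdot> \<delta>"
      using comm[OF Cons.prems(5)] c by (simp add: Sym.m_assoc[symmetric])
    also have "\<dots> = \<gamma> b \<cdot> (block_prod \<gamma> cs \<cdot> pinv (\<gamma> b)) \<cdot> \<delta>"
      using comm subgroup.m_inv_closed[OF R_subgroup] Cons.prems(3,4) True by simp
    also have "\<dots> = block_prod \<gamma> (c # cs) \<cdot> (pinv (\<gamma> b) \<cdot> \<delta>)"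
      using True c by (simp add: Sym.m_assoc)
    finally show ?thesis .
  next
    case False
    have IH: "block_prod (\<gamma>(b := \<delta>)) cs = block_prod \<gamma> cs \<cdot> (pinv (\<gamma> b) \<cdot> \<delta>)"
      using Cons.prems False by (intro Cons.IH) auto
    have "(\<gamma>(b := \<delta>)) c = \<gamma> c" using False by simp
    then have "block_prod (\<gamma>(b := \<delta>)) (c # cs) = \<gamma> c \<cdot> block_prod (\<gamma>(b := \<delta>)) cs"
      by (simp only: block_prod_Cons)
    also have "\<dots> = block_prod \<gamma> (c # cs) \<cdot> (pinv (\<gamma> b) \<cdot> \<delta>)"
      unfolding IH using c by (simp add: Sym.m_assoc)
    finally show ?thesis .
  qed
qed simp

lemma card_conjugating_families_le:
  assumes j: "j \<in> {1..n}" and s: "\<sigma> \<in> P" and bs: "set bs = blocks" "distinct bs"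
    and F: "\<And>b. b \<in> blocks \<Longrightarrow> F b \<subseteq> R b \<and> finite (F b)"
    and sparse: "\<And>c. c \<in> R (W \<sigma>) \<Longrightarrow>
      Suc m * card (F (W \<sigma>) \<inter> (c <#\<^bsub>BijGroup \<Omega>\<^esub> proj j \<sigma>)) \<le> card (F (W \<sigma>))"
  shows "Suc m * card {\<gamma> \<in> PiE blocks F. block_prod \<gamma> bs \<in> conjugators j \<sigma>} \<le> card (PiE blocks F)"
proof (rule card_PiE_sparse_slices)
  let ?Q = "{\<gamma> \<in> PiE blocks F. block_prod \<gamma> bs \<in> conjugators j \<sigma>}"
  show "finite blocks" "W \<sigma> \<in> blocks" "\<And>b. b \<in> blocks \<Longrightarrow> finite (F b)" "?Q \<subseteq> PiE blocks F"
    using finite_P s F by auto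
  fix \<gamma> assume \<gamma>: "\<gamma> \<in> ?Q"
  have \<gamma>R: "\<forall>b\<in>set bs. \<gamma> b \<in> R b"
  proof
    fix b assume "b \<in> set bs"
    then have "b \<in> blocks" "\<gamma> b \<in> F b" using \<gamma> bs(1) by (auto simp: PiE_iff)
    then show "\<gamma> b \<in> R b" using F by blast
  qed
  have \<gamma>\<sigma>: "\<gamma> (W \<sigma>) \<in> R (W \<sigma>)" using \<gamma>R bs(1) s by blast
  have "{x \<in> F (W \<sigma>). \<gamma>(W \<sigma> := x) \<in> ?Q} \<subseteq> F (W \<sigma>) \<inter> (\<gamma> (W \<sigma>) <#\<^bsub>BijGroup \<Omega>\<^esub> proj j \<sigma>)"
  proof clarify
    fix x assume x: "x \<in> F (W \<sigma>)" "block_prod (\<gamma>(W \<sigma> := x)) bs \<in> conjugators j \<sigma>"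
    have xR: "x \<in> R (W \<sigma>)" using x(1) F s by blast
    have c: "\<gamma> (W \<sigma>) \<in> Perm" "x \<in> Perm" using \<gamma>\<sigma> xR R_Perm by blast+
    have "pinv (\<gamma> (W \<sigma>)) \<cdot> x \<in> R (W \<sigma>)"
      using \<gamma>\<sigma> xR R_subgroup by (blast intro: subgroup.m_closed subgroup.m_inv_closed)
    moreover have "block_prod (\<gamma>(W \<sigma> := x)) bs = block_prod \<gamma> bs \<cdot> (pinv (\<gamma> (W \<sigma>)) \<cdot> x)"
      using block_prod_update[OF bs(2) _ _ \<gamma>R xR] bs(1) s by simp
    ultimately show "x \<in> \<gamma> (W \<sigma>) <#\<^bsub>BijGroup \<Omega>\<^esub> proj j \<sigma>"
      using proj_of_conjugators[OF j s block_prod_block_preserving[OF _ \<gamma>R]] \<gamma> x(2) bs(1)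
        Sym.lcoset_mem_iff[OF proj_subgroup[OF j s] c] by simp
  qed
  then have "card {x \<in> F (W \<sigma>). \<gamma>(W \<sigma> := x) \<in> ?Q}
      \<le> card (F (W \<sigma>) \<inter> (\<gamma> (W \<sigma>) <#\<^bsub>BijGroup \<Omega>\<^esub> proj j \<sigma>))"
    using F s by (intro card_mono) auto
  then show "Suc m * card {x \<in> F (W \<sigma>). \<gamma>(W \<sigma> := x) \<in> ?Q} \<le> card (F (W \<sigma>))"
    using sparse[OF \<gamma>\<sigma>] by (meson le_trans mult_le_mono2)
qed

lemma exists_sparse_block_sets:
  assumes Pc: "Pc \<subseteq> {1..n} \<times> P"
    and large: "\<And>j \<sigma>. (j, \<sigma>) \<in> Pc \<Longrightarrow>
      \<not> (\<exists>C. lcoset_cover (BijGroup \<Omega>) (R (W \<sigma>)) (proj j \<sigma>) C \<and> card C \<le> m)"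
  shows "\<exists>F. \<forall>b. F b \<subseteq> R b \<and> finite (F b) \<and> F b \<noteq> {} \<and> (\<forall>j \<sigma> c. (j, \<sigma>) \<in> Pc \<longrightarrow> W \<sigma> = b \<longrightarrow>
      c \<in> R b \<longrightarrow> Suc m * card (F b \<inter> (c <#\<^bsub>BijGroup \<Omega>\<^esub> proj j \<sigma>)) \<le> card (F b))"
proof -
  define S where "S b = (\<lambda>p. proj (fst p) (snd p)) ` {p \<in> Pc. W (snd p) = b}" for b
  have finPc: "finite Pc" using finite_subset[OF Pc] finite_P by blast
  have "\<forall>b. \<exists>F\<subseteq>R b. finite F \<and> F \<noteq> {} \<and>
    (\<forall>A\<in>S b. \<forall>c\<in>R b. Suc m * card (F \<inter> (c <#\<^bsub>BijGroup \<Omega>\<^esub> A)) \<le> card F)"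
  proof (intro allI Sym.exists_lcoset_sparse_subset[OF R_subgroup])
    fix b
    show "finite (S b)" unfolding S_def by (rule finite_imageI, rule finite_subset[OF _ finPc]) auto
    fix A assume "A \<in> S b"
    then obtain j \<sigma> where p: "(j, \<sigma>) \<in> Pc" "W \<sigma> = b" "A = proj j \<sigma>" unfolding S_def by auto
    then have "j \<in> {1..n}" "\<sigma> \<in> P" using Pc by auto
    then show "subgroup A (BijGroup \<Omega>) \<and> A \<subseteq> R b \<and>
        \<not> (\<exists>C. lcoset_cover (BijGroup \<Omega>) (R b) A C \<and> card C \<le> m)"
      using proj_subgroup proj_subset[of j \<sigma>] large p by blast
  qed
  from choice[OF this] obtain F where F: "\<forall>b. F b \<subseteq> R b \<and> finite (F b) \<and> F b \<noteq> {} \<and>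
    (\<forall>A\<in>S b. \<forall>c\<in>R b. Suc m * card (F b \<inter> (c <#\<^bsub>BijGroup \<Omega>\<^esub> A)) \<le> card (F b))" ..
  show ?thesis
  proof (intro exI allI conjI impI)
    fix b
    show "F b \<subseteq> R b" "finite (F b)" "F b \<noteq> {}" using F by blast+
    have Fb: "\<forall>A\<in>S b. \<forall>c\<in>R b. Suc m * card (F b \<inter> (c <#\<^bsub>BijGroup \<Omega>\<^esub> A)) \<le> card (F b)"
      using F by blast
    fix j \<sigma> c assume "(j, \<sigma>) \<in> Pc" "W \<sigma> = b" "c \<in> R b"
    moreover from this have "proj j \<sigma> \<in> S b" unfolding S_def by force
    ultimately show "Suc m * card (F b \<inter> (c <#\<^bsub>BijGroup \<Omega>\<^esub> proj j \<sigma>)) \<le> card (F b)"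
      using Fb by blast
  qed
qed

lemma block_prod_conjugator:
  assumes bs: "set bs = blocks" and \<gamma>: "\<And>b. b \<in> blocks \<Longrightarrow> \<gamma> b \<in> R b"
  shows "\<exists>j\<in>{1..n}. \<exists>\<sigma>\<in>P. block_preserving (block_prod \<gamma> bs) \<and> block_prod \<gamma> bs \<in> conjugators j \<sigma>"
proof -
  have k: "block_preserving (block_prod \<gamma> bs)" using block_prod_block_preserving bs \<gamma> by simp
  then have "block_prod \<gamma> bs \<in> G" unfolding block_preserving_def by blast
  then show ?thesis using conjugators_of_confining k by blast
qed

text \<open>Otherwise choose in every block a finite set meeting each coset of the relevant projections
  sparsely. Among the products of one chosen element per block, each of the at most \<open>m\<close> pairs
  \<open>(j, \<sigma>)\<close> is realised by at most a fraction \<open>1 / (m + 1)\<close>, yet confinement realises a pair for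
  every product.\<close>

lemma exists_conjugator_with_proj_of_small_index:
  "\<exists>j\<in>{1..n}. \<exists>\<sigma>\<in>P. \<exists>k. block_preserving k \<and> k \<in> conjugators j \<sigma> \<and>
     (\<exists>C. lcoset_cover (BijGroup \<Omega>) (R (W \<sigma>)) (proj j \<sigma>) C \<and> card C \<le> m)"
proof (rule ccontr)
  assume none: "\<not> ?thesis"
  define Pc where "Pc = {(j, \<sigma>) \<in> {1..n} \<times> P. \<exists>k. block_preserving k \<and> k \<in> conjugators j \<sigma>}"
  have Pc: "Pc \<subseteq> {1..n} \<times> P" unfolding Pc_def by blast
  then have finPc: "finite Pc" and cardPc: "card Pc \<le> m"
    using finite_P card_mono[of "{1..n} \<times> P" Pc] finite_subset by (auto simp: card_cartesian_product)
  have "\<not> (\<exists>C. lcoset_cover (BijGroup \<Omega>) (R (W \<sigma>)) (proj j \<sigma>) C \<and> card C \<le> m)"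
    if "(j, \<sigma>) \<in> Pc" for j \<sigma> using that none unfolding Pc_def by blast
  from exists_sparse_block_sets[OF Pc this] obtain F where F0: "\<forall>b. F b \<subseteq> R b \<and> finite (F b) \<and>
    F b \<noteq> {} \<and> (\<forall>j \<sigma> c. (j, \<sigma>) \<in> Pc \<longrightarrow> W \<sigma> = b \<longrightarrow>
      c \<in> R b \<longrightarrow> Suc m * card (F b \<inter> (c <#\<^bsub>BijGroup \<Omega>\<^esub> proj j \<sigma>)) \<le> card (F b))" ..
  then have F: "\<And>b. F b \<subseteq> R b \<and> finite (F b) \<and> F b \<noteq> {}"
    and sparse: "\<And>j \<sigma> c. (j, \<sigma>) \<in> Pc \<Longrightarrow> c \<in> R (W \<sigma>) \<Longrightarrow>
      Suc m * card (F (W \<sigma>) \<inter> (c <#\<^bsub>BijGroup \<Omega>\<^esub> proj j \<sigma>)) \<le> card (F (W \<sigma>))"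
    by blast+
  have finite_blocks: "finite blocks" using finite_P by simp
  from finite_distinct_list[OF this] obtain bs where bs: "set bs = blocks" "distinct bs" by blast
  define \<Gamma> where "\<Gamma> = PiE blocks F"
  have "card \<Gamma> = (\<Prod>b\<in>blocks. card (F b))" unfolding \<Gamma>_def by (rule card_PiE[OF finite_blocks])
  then have pos: "card \<Gamma> > 0" using F finite_blocks by (simp add: prod_pos card_gt_0_iff)
  have fin\<Gamma>: "finite \<Gamma>" unfolding \<Gamma>_def using F finite_blocks by (intro finite_PiE) auto
  define \<Gamma>p where "\<Gamma>p p = {\<gamma> \<in> \<Gamma>. block_prod \<gamma> bs \<in> conjugators (fst p) (snd p)}" for p
  have cover: "\<Gamma> \<subseteq> (\<Union>p\<in>Pc. \<Gamma>p p)"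
  proof
    fix \<gamma> assume \<gamma>: "\<gamma> \<in> \<Gamma>"
    then have "\<gamma> b \<in> R b" if "b \<in> blocks" for b
      using PiE_mem[OF \<gamma>[unfolded \<Gamma>_def] that] F by blast
    then obtain j \<sigma> where "j \<in> {1..n}" "\<sigma> \<in> P" "block_preserving (block_prod \<gamma> bs)"
      "block_prod \<gamma> bs \<in> conjugators j \<sigma>"
      using block_prod_conjugator[OF bs(1)] by blast
    then have "(j, \<sigma>) \<in> Pc" "\<gamma> \<in> \<Gamma>p (j, \<sigma>)" using \<gamma> unfolding Pc_def \<Gamma>p_def by auto
    then show "\<gamma> \<in> (\<Union>p\<in>Pc. \<Gamma>p p)" by blast
  qed
  have bound: "Suc m * card (\<Gamma>p p) \<le> card \<Gamma>" if p: "p \<in> Pc" for p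
  proof -
    obtain j \<sigma> where p_eq: "p = (j, \<sigma>)" and js: "j \<in> {1..n}" "\<sigma> \<in> P" using p Pc by auto
    have "\<And>b. b \<in> blocks \<Longrightarrow> F b \<subseteq> R b \<and> finite (F b)" using F by blast
    from card_conjugating_families_le[OF js bs this sparse[OF p[unfolded p_eq]]]
    show ?thesis unfolding \<Gamma>p_def \<Gamma>_def p_eq by simp
  qed
  have "finite (\<Gamma>p p)" for p using fin\<Gamma> unfolding \<Gamma>p_def by simp
  then have "card \<Gamma> \<le> card (\<Union>p\<in>Pc. \<Gamma>p p)" using finPc by (intro card_mono[OF _ cover]) auto
  also have "\<dots> \<le> (\<Sum>p\<in>Pc. card (\<Gamma>p p))" by (rule card_UN_le[OF finPc])
  finally have "Suc m * card \<Gamma> \<le> Suc m * (\<Sum>p\<in>Pc. card (\<Gamma>p p))" by (rule mult_le_mono2)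
  also have "\<dots> = (\<Sum>p\<in>Pc. Suc m * card (\<Gamma>p p))" by (rule sum_distrib_left)
  also have "\<dots> \<le> (\<Sum>p\<in>Pc. card \<Gamma>)" using bound by (intro sum_mono)
  also have "\<dots> \<le> m * card \<Gamma>" using cardPc by simp
  finally show False using pos by simp
qed

lemma proj_normalizes:
  assumes j: "j \<in> {1..n}" and s: "\<sigma> \<in> P" and a: "a \<in> proj j \<sigma>" and z: "z \<in> H j \<inter> R (W \<sigma>)"
  shows "a \<cdot> z \<cdot> pinv a \<in> H j \<inter> R (W \<sigma>)"
proof -
  obtain \<beta> where \<beta>: "\<beta> \<in> R (W \<sigma>)" "a \<cdot> (\<sigma> \<cdot> \<beta> \<cdot> pinv \<sigma>) \<in> H j" and aR: "a \<in> R (W \<sigma>)"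
    using a unfolding proj_def by blast
  define p where "p = \<sigma> \<cdot> \<beta> \<cdot> pinv \<sigma>"
  have c: "a \<in> Perm" "z \<in> Perm" "p \<in> Perm" using aR z \<beta> R_Perm conj_supported s P_Perm unfolding p_def by blast+
  have "p \<cdot> z = z \<cdot> p"
    using R_commute_conj[OF s _ \<beta>(1)] z unfolding p_def by blast
  then have "(a \<cdot> p) \<cdot> z \<cdot> pinv (a \<cdot> p) = a \<cdot> z \<cdot> pinv a"
    using Sym.conj_mult_assoc Sym.conj_eq_of_commute c by simp
  moreover have "(a \<cdot> p) \<cdot> z \<cdot> pinv (a \<cdot> p) \<in> H j"
    using \<beta>(2) z H_subgroup[OF j] unfolding p_def by (blast intro: subgroup.m_closed subgroup.m_inv_closed)
  moreover have "a \<cdot> z \<cdot> pinv a \<in> R (W \<sigma>)"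
    using aR z R_subgroup by (blast intro: subgroup.m_closed subgroup.m_inv_closed)
  ultimately show ?thesis by simp
qed

lemma proj_subset_normalizer:
  assumes j: "j \<in> {1..n}" and s: "\<sigma> \<in> P"
  shows "proj j \<sigma> \<subseteq> normalizer_in \<Omega> (R (W \<sigma>)) (H j \<inter> R (W \<sigma>))"
proof
  fix a assume a: "a \<in> proj j \<sigma>"
  have ia: "pinv a \<in> proj j \<sigma>" using subgroup.m_inv_closed[OF proj_subgroup[OF j s] a] .
  have aP: "a \<in> Perm" using a proj_subset R_Perm by blast
  have "H j \<inter> R (W \<sigma>) \<subseteq> (\<lambda>h. a \<cdot> h \<cdot> pinv a) ` (H j \<inter> R (W \<sigma>))"
  proof
    fix z assume z: "z \<in> H j \<inter> R (W \<sigma>)"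
    have "z \<in> Perm" using z R_Perm by blast
    then have "z = a \<cdot> (pinv a \<cdot> z \<cdot> pinv (pinv a)) \<cdot> pinv a"
      using aP by (simp add: Sym.m_assoc)
    then show "z \<in> (\<lambda>h. a \<cdot> h \<cdot> pinv a) ` (H j \<inter> R (W \<sigma>))"
      using proj_normalizes[OF j s ia z] by blast
  qed
  moreover have "(\<lambda>h. a \<cdot> h \<cdot> pinv a) ` (H j \<inter> R (W \<sigma>)) \<subseteq> H j \<inter> R (W \<sigma>)"
    using proj_normalizes[OF j s a] by blast
  ultimately have "conj_set \<Omega> a (H j \<inter> R (W \<sigma>)) = H j \<inter> R (W \<sigma>)"
    unfolding conj_set_eq by (rule antisym[rotated])
  then show "a \<in> normalizer_in \<Omega> (R (W \<sigma>)) (H j \<inter> R (W \<sigma>))"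
    using a proj_subset unfolding normalizer_in_def by blast
qed

lemma index_normalizer_le:
  assumes j: "j \<in> {1..n}" and s: "\<sigma> \<in> P"
    and C: "lcoset_cover (BijGroup \<Omega>) (R (W \<sigma>)) (proj j \<sigma>) C" "card C \<le> m"
  shows "index_le \<Omega> (R (W \<sigma>)) (normalizer_in \<Omega> (R (W \<sigma>)) (H j \<inter> R (W \<sigma>))) m"
proof -
  have "H j \<inter> R (W \<sigma>) \<subseteq> Perm" using R_Perm by blast
  moreover have "normalizer_in \<Omega> (R (W \<sigma>)) (H j \<inter> R (W \<sigma>)) \<subseteq> R (W \<sigma>)"
    unfolding normalizer_in_def by blast
  ultimately show ?thesis
    using Sym.card_rcosets_le_of_lcoset_cover[OF R_subgroup proj_subgroup[OF j s]
        proj_subset_normalizer[OF j s] _ normalizer_in_pmult[OF R_subgroup] C(1)] C(2)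
    unfolding index_le_def by (meson le_trans)
qed

lemma eq_pone_of_commuting_lcoset_cover:
  assumes s: "\<sigma> \<in> P" and y: "y \<in> R (W \<sigma>)" and A: "A \<subseteq> R (W \<sigma>)"
    and comm: "\<And>a. a \<in> A \<Longrightarrow> a \<cdot> y = y \<cdot> a"
    and C: "lcoset_cover (BijGroup \<Omega>) (R (W \<sigma>)) A C" "card C \<le> m"
  shows "y = pone"
  using FC_le_of_lcoset_cover[OF R_subgroup y A comm C] Rist_FC_trivial[OF s] by blast

lemma block_preserving_inv_image:
  assumes k: "block_preserving k" and s: "\<sigma> \<in> P"
  shows "pinv k ` W \<sigma> = W \<sigma>"
proof -
  have kP: "k \<in> Perm" and kW: "k ` W \<sigma> = W \<sigma>"
    using k s G_Perm unfolding block_preserving_def by auto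
  have "(\<lambda>x. pinv k (k x)) ` W \<sigma> = (\<lambda>x. x) ` W \<sigma>"
    using pinv_apply[OF kP] W_subset[OF s] by (intro image_cong) auto
  then have "pinv k ` (k ` W \<sigma>) = W \<sigma>" by (simp add: image_image)
  then show ?thesis using kW by simp
qed

lemma block_preserving_conj_R:
  assumes k: "block_preserving k" and s: "\<sigma> \<in> P" and \<beta>: "\<beta> \<in> R (W \<sigma>)"
  shows "pinv k \<cdot> \<beta> \<cdot> k \<in> R (W \<sigma>)" "k \<cdot> \<beta> \<cdot> pinv k \<in> R (W \<sigma>)"
proof -
  have kG: "k \<in> G" and kP: "k \<in> Perm" and kW: "k ` W \<sigma> = W \<sigma>"
    using k s G_Perm unfolding block_preserving_def by auto
  have \<beta>G: "\<beta> \<in> G" using \<beta> R_G by blast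
  have ikG: "pinv k \<in> G" by (rule subgroup.m_inv_closed[OF G_subgroup kG])
  have "supported (pinv k \<cdot> \<beta> \<cdot> pinv (pinv k)) (pinv k ` W \<sigma>)"
    using conj_supported[OF Sym.inv_closed[OF kP] \<beta>] by blast
  moreover have "pinv k \<cdot> \<beta> \<cdot> k \<in> G"
    using subgroup.m_closed[OF G_subgroup subgroup.m_closed[OF G_subgroup ikG \<beta>G] kG] .
  ultimately show "pinv k \<cdot> \<beta> \<cdot> k \<in> R (W \<sigma>)"
    using block_preserving_inv_image[OF k s] kP unfolding Rist_eq by simp
  have "supported (k \<cdot> \<beta> \<cdot> pinv k) (k ` W \<sigma>)" using conj_supported[OF kP \<beta>] by blast
  moreover have "k \<cdot> \<beta> \<cdot> pinv k \<in> G"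
    using subgroup.m_closed[OF G_subgroup subgroup.m_closed[OF G_subgroup kG \<beta>G] ikG] .
  ultimately show "k \<cdot> \<beta> \<cdot> pinv k \<in> R (W \<sigma>)" using kW unfolding Rist_eq by simp
qed

text \<open>Conjugating an element of \<open>H j \<inter> (R (W \<sigma>) \<times> \<sigma> R (W \<sigma>) \<sigma>\<^sup>-\<^sup>1)\<close> by the element
  \<open>k\<^sup>-\<^sup>1 \<sigma> k\<close> of \<open>H j\<close> moves its second component back into \<open>R (W \<sigma>)\<close> and its first one
  onto \<open>\<sigma>\<^sup>-\<^sup>1 ` W \<sigma>\<close>.\<close>

lemma conj_by_block_preserving_conjugator:
  assumes s: "\<sigma> \<in> P" and k: "block_preserving k" and \<alpha>: "\<alpha> \<in> R (W \<sigma>)" and \<beta>: "\<beta> \<in> R (W \<sigma>)"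
  shows "\<exists>q. q \<in> Perm \<and> supported q (pinv \<sigma> ` W \<sigma>) \<and>
    pinv (pinv k \<cdot> \<sigma> \<cdot> k) \<cdot> (\<alpha> \<cdot> (\<sigma> \<cdot> \<beta> \<cdot> pinv \<sigma>)) \<cdot> (pinv k \<cdot> \<sigma> \<cdot> k)
      = q \<cdot> (pinv k \<cdot> \<beta> \<cdot> k)"
proof -
  have kG: "k \<in> G" and kU: "supported k (\<Union>blocks)" using k unfolding block_preserving_def by blast+
  have c: "k \<in> Perm" "\<sigma> \<in> Perm" "\<alpha> \<in> Perm" "\<beta> \<in> Perm"
    using kG G_Perm s P_Perm \<alpha> \<beta> R_Perm by blast+
  define q where "q = pinv \<sigma> \<cdot> (k \<cdot> \<alpha> \<cdot> pinv k) \<cdot> \<sigma>"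
  have "pinv \<sigma> \<cdot> (k \<cdot> \<alpha> \<cdot> pinv k) \<cdot> pinv (pinv \<sigma>) \<in> Perm \<and>
      supported (pinv \<sigma> \<cdot> (k \<cdot> \<alpha> \<cdot> pinv k) \<cdot> pinv (pinv \<sigma>)) (pinv \<sigma> ` W \<sigma>)"
    using conj_supported[OF Sym.inv_closed[OF c(2)] block_preserving_conj_R(2)[OF k s \<alpha>]] by blast
  then have q: "q \<in> Perm" "supported q (pinv \<sigma> ` W \<sigma>)" unfolding q_def using c(2) by simp_all
  have "k \<cdot> (\<sigma> \<cdot> \<beta> \<cdot> pinv \<sigma>) = (\<sigma> \<cdot> \<beta> \<cdot> pinv \<sigma>) \<cdot> k"
    using supported_on_disjoint_commute[OF c(1) kU conj_supported[OF c(2) \<beta>]] moves_block[OF s] by blast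
  moreover have "k \<cdot> q = q \<cdot> k"
    using supported_on_disjoint_commute[OF c(1) kU q] inv_moves_block[OF s] by blast
  ultimately have "pinv (pinv k \<cdot> \<sigma> \<cdot> k) \<cdot> (\<alpha> \<cdot> (\<sigma> \<cdot> \<beta> \<cdot> pinv \<sigma>)) \<cdot> (pinv k \<cdot> \<sigma> \<cdot> k)
      = q \<cdot> (pinv k \<cdot> \<beta> \<cdot> k)"
    unfolding q_def by (rule Sym.conj_by_conjugator[OF c])
  then show ?thesis using q by blast
qed

text \<open>The commutator of \<open>\<alpha> \<cdot> \<sigma> \<beta> \<sigma>\<^sup>-\<^sup>1\<close> and of the conjugate \<open>q \<cdot> k\<^sup>-\<^sup>1 \<beta>' k\<close> of
  \<open>\<alpha>' \<cdot> \<sigma> \<beta>' \<sigma>\<^sup>-\<^sup>1\<close>, both in \<open>H j\<close>, is the commutator of \<open>\<alpha>\<close> and \<open>k\<^sup>-\<^sup>1 \<beta>' k\<close>, which lies in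
  \<open>R (W \<sigma>)\<close>: all other pairs of factors have disjoint supports.\<close>

lemma proj_commute_of_trivial_Int:
  assumes j: "j \<in> {1..n}" and s: "\<sigma> \<in> P" and k: "block_preserving k" "k \<in> conjugators j \<sigma>"
    and \<alpha>: "\<alpha> \<in> proj j \<sigma>" and \<alpha>': "\<alpha>' \<in> R (W \<sigma>)" and \<beta>': "\<beta>' \<in> R (W \<sigma>)"
    and z: "\<alpha>' \<cdot> (\<sigma> \<cdot> \<beta>' \<cdot> pinv \<sigma>) \<in> H j" and triv: "H j \<inter> R (W \<sigma>) = {pone}"
  shows "\<alpha> \<cdot> (pinv k \<cdot> \<beta>' \<cdot> k) = (pinv k \<cdot> \<beta>' \<cdot> k) \<cdot> \<alpha>"
proof -
  note Hj = H_subgroup[OF j]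
  obtain \<beta> where \<beta>: "\<beta> \<in> R (W \<sigma>)" "\<alpha> \<cdot> (\<sigma> \<cdot> \<beta> \<cdot> pinv \<sigma>) \<in> H j" and \<alpha>R: "\<alpha> \<in> R (W \<sigma>)"
    using \<alpha> unfolding proj_def by blast
  obtain q where q: "q \<in> Perm" "supported q (pinv \<sigma> ` W \<sigma>)"
    and v: "pinv (pinv k \<cdot> \<sigma> \<cdot> k) \<cdot> (\<alpha>' \<cdot> (\<sigma> \<cdot> \<beta>' \<cdot> pinv \<sigma>)) \<cdot> (pinv k \<cdot> \<sigma> \<cdot> k)
      = q \<cdot> (pinv k \<cdot> \<beta>' \<cdot> k)"
    using conj_by_block_preserving_conjugator[OF s k(1) \<alpha>' \<beta>'] by blast
  define p where "p = \<sigma> \<cdot> \<beta> \<cdot> pinv \<sigma>"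
  define b where "b = pinv k \<cdot> \<beta>' \<cdot> k"
  have bR: "b \<in> R (W \<sigma>)" unfolding b_def by (rule block_preserving_conj_R(1)[OF k(1) s \<beta>'])
  have p: "p \<in> Perm" "supported p (\<sigma> ` W \<sigma>)"
    unfolding p_def using conj_supported[OF _ \<beta>(1)] s P_Perm by blast+
  have c: "\<alpha> \<in> Perm" "b \<in> Perm" using \<alpha>R bR R_Perm by blast+
  have "\<alpha> \<cdot> p = p \<cdot> \<alpha>" "p \<cdot> b = b \<cdot> p"
    using R_commute_conj[OF s \<alpha>R \<beta>(1)] R_commute_conj[OF s bR \<beta>(1)] unfolding p_def by simp_all
  moreover have "p \<cdot> q = q \<cdot> p"
    using supported_on_disjoint_commute[OF p q] moves_block_inv[OF s] by blast
  moreover have "q \<cdot> \<alpha> = \<alpha> \<cdot> q" "q \<cdot> b = b \<cdot> q"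
    using supported_on_disjoint_commute[OF q c(1) R_supported[OF \<alpha>R]]
      supported_on_disjoint_commute[OF q c(2) R_supported[OF bR]] inv_moves_block_self[OF s] by blast+
  ultimately have comm: "(\<alpha> \<cdot> p) \<cdot> (q \<cdot> b) \<cdot> pinv (\<alpha> \<cdot> p) \<cdot> pinv (q \<cdot> b) = \<alpha> \<cdot> b \<cdot> pinv \<alpha> \<cdot> pinv b"
    using Sym.commutator_eq_of_commute c p(1) q(1) by blast
  have "pinv k \<cdot> \<sigma> \<cdot> k \<in> H j" using k(2) unfolding conjugators_def by blast
  then have "q \<cdot> b \<in> H j"
    using z v unfolding b_def by (metis subgroup.m_closed subgroup.m_inv_closed Hj)
  moreover have "\<alpha> \<cdot> p \<in> H j" using \<beta>(2) unfolding p_def .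
  ultimately have "\<alpha> \<cdot> b \<cdot> pinv \<alpha> \<cdot> pinv b \<in> H j"
    using comm Hj by (metis subgroup.m_closed subgroup.m_inv_closed)
  moreover have "\<alpha> \<cdot> b \<cdot> pinv \<alpha> \<cdot> pinv b \<in> R (W \<sigma>)"
    using \<alpha>R bR R_subgroup by (metis subgroup.m_closed subgroup.m_inv_closed)
  ultimately have "\<alpha> \<cdot> b \<cdot> pinv \<alpha> \<cdot> pinv b = pone" using triv by blast
  then show ?thesis using Sym.commute_of_commutator_one[OF c] unfolding b_def by blast
qed

lemma H_Int_R_nontrivial:
  assumes j: "j \<in> {1..n}" and s: "\<sigma> \<in> P" and k: "block_preserving k" "k \<in> conjugators j \<sigma>"
    and C: "lcoset_cover (BijGroup \<Omega>) (R (W \<sigma>)) (proj j \<sigma>) C" "card C \<le> m"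
  shows "H j \<inter> R (W \<sigma>) \<noteq> {pone}"
proof
  assume triv: "H j \<inter> R (W \<sigma>) = {pone}"
  have second_trivial: "\<beta> = pone"
    if "\<alpha> \<in> R (W \<sigma>)" "\<beta> \<in> R (W \<sigma>)" "\<alpha> \<cdot> (\<sigma> \<cdot> \<beta> \<cdot> pinv \<sigma>) \<in> H j" for \<alpha> \<beta>
  proof -
    have "pinv k \<cdot> \<beta> \<cdot> k = pone"
      using eq_pone_of_commuting_lcoset_cover[OF s block_preserving_conj_R(1)[OF k(1) s that(2)] proj_subset _ C]
        proj_commute_of_trivial_Int[OF j s k _ that triv] by blast
    moreover have "k \<in> Perm" "\<beta> \<in> Perm" using k(1) G_Perm that(2) R_Perm unfolding block_preserving_def by blast+
    ultimately show ?thesis by (metis Sym.inv_closed Sym.l_inv Sym.m_closed Sym.inv_solve_left Sym.r_one Sym.inv_inv)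
  qed
  have proj_trivial: "a = pone" if a: "a \<in> proj j \<sigma>" for a
  proof -
    obtain \<beta> where \<beta>: "a \<in> R (W \<sigma>)" "\<beta> \<in> R (W \<sigma>)" "a \<cdot> (\<sigma> \<cdot> \<beta> \<cdot> pinv \<sigma>) \<in> H j"
      using a unfolding proj_def by blast
    moreover have "\<sigma> \<in> Perm" "a \<in> Perm" using s P_Perm \<open>a \<in> R (W \<sigma>)\<close> R_Perm by blast+
    moreover have "\<beta> = pone" using second_trivial[OF \<beta>] .
    ultimately have "a \<in> H j \<inter> R (W \<sigma>)" by simp
    then show ?thesis using triv by blast
  qed
  have "y = pone" if y: "y \<in> R (W \<sigma>)" for y
  proof (rule eq_pone_of_commuting_lcoset_cover[OF s y proj_subset _ C])
    fix a assume "a \<in> proj j \<sigma>"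
    then have "a = pone" by (rule proj_trivial)
    moreover have "y \<in> Perm" using y R_Perm by blast
    ultimately show "a \<cdot> y = y \<cdot> a" by simp
  qed
  then show False using Rist_nontrivial[OF s] subgroup.one_closed[OF R_subgroup] by blast
qed

end

theorem theorem3p17:
  fixes \<Omega> :: "'a set" and n :: nat and H :: "nat \<Rightarrow> ('a \<Rightarrow> 'a) set"
    and G P :: "('a \<Rightarrow> 'a) set" and W :: "('a \<Rightarrow> 'a) \<Rightarrow> 'a set"
  assumes "n \<ge> 1"
    and "\<And>j. j \<in> {1..n} \<Longrightarrow> subgroup (H j) (BijGroup \<Omega>)"
    and "subgroup G (BijGroup \<Omega>)"
    and "confined_by \<Omega> n H G"
    and "confining_subset \<Omega> n H G P"
    and "displacement_configuration \<Omega> P W"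
    and "\<And>\<sigma>. \<sigma> \<in> P \<Longrightarrow> Rist \<Omega> G (W \<sigma>) \<noteq> {\<one>\<^bsub>BijGroup \<Omega>\<^esub>}"
    and "\<And>\<sigma>. \<sigma> \<in> P \<Longrightarrow> FC_le \<Omega> (n * card P) (Rist \<Omega> G (W \<sigma>)) = {\<one>\<^bsub>BijGroup \<Omega>\<^esub>}"
  shows "\<exists>\<rho>\<in>P. \<exists>k\<in>{1..n}. \<exists>N. subgroup N (BijGroup \<Omega>) \<and> N \<subseteq> H k \<and>
           N \<noteq> {\<one>\<^bsub>BijGroup \<Omega>\<^esub>} \<and> N \<subseteq> Rist \<Omega> G (W \<rho>) \<and>
           index_le \<Omega> (Rist \<Omega> G (W \<rho>)) (normalizer_in \<Omega> (Rist \<Omega> G (W \<rho>)) N) (n * card P)"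
proof -
  interpret confining_configuration \<Omega> n H G P W
    using assms(2,3,5-8) by (rule confining_configuration.intro)
  obtain j \<sigma> k C where js: "j \<in> {1..n}" "\<sigma> \<in> P" and k: "block_preserving k" "k \<in> conjugators j \<sigma>"
    and C: "lcoset_cover (BijGroup \<Omega>) (R (W \<sigma>)) (proj j \<sigma>) C" "card C \<le> n * card P"
    using exists_conjugator_with_proj_of_small_index by blast
  have "subgroup (H j \<inter> R (W \<sigma>)) (BijGroup \<Omega>)"
    using Sym.subgroups_Inter_pair[OF H_subgroup[OF js(1)] R_subgroup] .
  then show ?thesis
    using js H_Int_R_nontrivial[OF js k C] index_normalizer_le[OF js C] by blast
qed

end
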